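(* Consider the homogeneous all-to-all network described in the context with coupling $\varepsilon$, $(N-1)\varepsilon<1$, a neuronal partial reset $R$, and let $2\le a_1\le N$. Consider the conditions, for $a\in\{1,\dots,a_1-1\}$, (A) $U^{-1}\big(R((a_1-1)\varepsilon)\big)-U^{-1}\big(R((a_1-1)\varepsilon-a\varepsilon)\big)\le U^{-1}\big(1-(N-a_1)\varepsilon\big)-U^{-1}\big(1-(N-a_1)\varepsilon-a\varepsilon\big)$, (B) $U^{-1}\big(R((a_1-1)\varepsilon)+(N-a_1)\varepsilon\big)-U^{-1}\big(R((a_1-1)\varepsilon-a\varepsilon)+(N-a_1)\varepsilon\big)\le1-U^{-1}(1-a\varepsilon)$. If $U$ is icpd, then (A) for all $a\in\{1,\dots,a_1-1\}$ is sufficient, and (B) for all $a\in\{1,\dots,a_1-1\}$ is necessary, for an avalanche of size $a_1$ to be invariant under return. If $U$ is dcpd, then (B) for all such $a$ is sufficient and (A) for all such $a$ is necessary.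
   Context: Model: $N$ units, phases $\phi_i$, rise function $U$ (smooth, $U'>0$, $U(0)=0$, $U(1)=1$), partial reset $R$ (monotonically increasing, $R(0)=0$; neuronal if $0\le R(\zeta)\le\zeta$ for $\zeta\ge0$). $H_\varepsilon(\phi)=U^{-1}(U(\phi)+\varepsilon)$, $J_\varepsilon(\phi)=U^{-1}(R(U(\phi)+\varepsilon-1))$, $S_\sigma(\phi)=\phi+\sigma$, $\bigodot_{r=p}^q(S_{\sigma_r}\circ H_{\varepsilon_r}):=S_{\sigma_q}\circ H_{\varepsilon_q}\circ\cdots\circ S_{\sigma_p}\circ H_{\varepsilon_p}$. Homogeneous all-to-all coupling: pulse strength $\varepsilon>0$ from every unit to every other unit, no self-coupling. Dynamics: between events phases increase at unit rate; when units reach phase $1$ an avalanche occurs: potentials $u_i=U(\phi_i)$ of all units are raised by $\varepsilon$ per firing unit other than themselves, any unit whose potential thereby reaches $\ge1$ also fires, iterating until no new unit crosses; a unit that does not fire has new phase $H_{k\varepsilon}(\phi_i)$, a firing unit has new phase $J_{k'\varepsilon}(\phi_i)$, where $k$ (resp. $k'$) is the number of firing units (other than itself). Firing sequence: for a state in which an avalanche of $a_1$ units is triggered by the unit(s) at phase $1$, list the avalanches until the trigger unit fires next as $\mathcal{F}=((a_1,\sigma_1),\dots,(a_m,\sigma_m))$, $a_r$ = size of the $r$-th avalanche, $\sigma_r\ge0$ the time between the $r$-th and next avalanche. $\mathcal{F}$ is admissible if it is realized by some state, and trigger invariant if the triggering unit(s) of the first avalanche are again at phase $1$ at the end. For a unit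 in the first avalanche with phase $\phi$ just before it, its phase at the end is $M_{\mathcal{F}}(\phi)=\big[\bigodot_{r=2}^m(S_{\sigma_r}\circ H_{a_r\varepsilon})\big]\circ S_{\sigma_1}\circ J_{(a_1-1)\varepsilon}(\phi)$. An avalanche of size $a_1$ is invariant under return if $M_{\mathcal{F}}(U^{-1}(1-a\varepsilon))\ge U^{-1}(1-a\varepsilon)$ for all $a\in\{1,\dots,a_1-1\}$ and all admissible trigger-invariant $\mathcal{F}$ with first avalanche size $a_1$. icpd/dcpd: with $\Delta H(\phi,\Delta\phi,\varepsilon)=H_\varepsilon(\phi+\Delta\phi)-H_\varepsilon(\phi)$ on $\mathcal{D}=\{0\le\varepsilon\le1,0\le\phi\le1,0\le\Delta\phi\le U^{-1}(1-\varepsilon)-\phi\}$, $U$ is icpd if $\partial_\phi\Delta H\ge0$ on $\mathcal{D}$ and dcpd if $\partial_\phi\Delta H\le0$ on $\mathcal{D}$. *)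

theory Defs
  imports "HOL-Analysis.Analysis"
begin

text \<open>Units are indexed by 0..N-1; a state is a phase vector phi :: nat => real
  (only the entries below N matter).  U is the rise function, U^{-1} its inverse on [0,1].\<close>

definition Uinv :: "(real \<Rightarrow> real) \<Rightarrow> real \<Rightarrow> real" where
  "Uinv U y = the_inv_into {0..1} U y"

definition Hmap :: "(real \<Rightarrow> real) \<Rightarrow> real \<Rightarrow> real \<Rightarrow> real" where
  "Hmap U e phi = Uinv U (U phi + e)"

definition Jmap :: "(real \<Rightarrow> real) \<Rightarrow> (real \<Rightarrow> real) \<Rightarrow> real \<Rightarrow> real \<Rightarrow> real" where
  "Jmap U R e phi = Uinv U (R (U phi + e - 1))"

definition Smap :: "real \<Rightarrow> real \<Rightarrow> real" where
  "Smap s phi = phi + s"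

definition rise_function :: "(real \<Rightarrow> real) \<Rightarrow> bool" where
  "rise_function U \<longleftrightarrow>
     (\<forall>k. \<forall>x\<in>{0..1}. ((deriv ^^ k) U has_real_derivative (deriv ^^ Suc k) U x) (at x))
   \<and> (\<forall>x\<in>{0..1}. deriv U x > 0) \<and> U 0 = 0 \<and> U 1 = 1"

definition neuronal_reset :: "(real \<Rightarrow> real) \<Rightarrow> bool" where
  "neuronal_reset R \<longleftrightarrow> mono_on {0..} R \<and> R 0 = 0 \<and> (\<forall>z\<ge>0. 0 \<le> R z \<and> R z \<le> z)"

definition DeltaH :: "(real \<Rightarrow> real) \<Rightarrow> real \<Rightarrow> real \<Rightarrow> real \<Rightarrow> real" where
  "DeltaH U phi dphi e = Hmap U e (phi + dphi) - Hmap U e phi"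

definition cpdDom :: "(real \<Rightarrow> real) \<Rightarrow> (real \<times> real \<times> real) set" where
  "cpdDom U = {(e, phi, dphi). 0 \<le> e \<and> e \<le> 1 \<and> 0 \<le> phi \<and> phi \<le> 1 \<and>
                 0 \<le> dphi \<and> dphi \<le> Uinv U (1 - e) - phi}"

text \<open>Partial derivative in phi on the closed domain D: derivative of the phi-section,
  taken within the section (unique wherever the section accumulates at phi).\<close>
definition icpd :: "(real \<Rightarrow> real) \<Rightarrow> bool" where
  "icpd U \<longleftrightarrow> (\<forall>e phi dphi d. (e, phi, dphi) \<in> cpdDom U \<longrightarrow>
      \<not> trivial_limit (at phi within {x. (e, x, dphi) \<in> cpdDom U}) \<longrightarrow>
      ((\<lambda>x. DeltaH U x dphi e) has_real_derivative d) (at phi within {x. (e, x, dphi) \<in> cpdDom U}) \<longrightarrow>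
      d \<ge> 0)"

definition dcpd :: "(real \<Rightarrow> real) \<Rightarrow> bool" where
  "dcpd U \<longleftrightarrow> (\<forall>e phi dphi d. (e, phi, dphi) \<in> cpdDom U \<longrightarrow>
      \<not> trivial_limit (at phi within {x. (e, x, dphi) \<in> cpdDom U}) \<longrightarrow>
      ((\<lambda>x. DeltaH U x dphi e) has_real_derivative d) (at phi within {x. (e, x, dphi) \<in> cpdDom U}) \<longrightarrow>
      d \<le> 0)"

definition valid_state :: "nat \<Rightarrow> (nat \<Rightarrow> real) \<Rightarrow> bool" where
  "valid_state N phi \<longleftrightarrow> (\<forall>i<N. 0 \<le> phi i \<and> phi i \<le> 1) \<and> (\<exists>i<N. phi i = 1)"

definition trig :: "nat \<Rightarrow> (nat \<Rightarrow> real) \<Rightarrow> nat set" where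
  "trig N phi = {i. i < N \<and> phi i = 1}"

text \<open>A set S of firing units is closed if no further unit is pushed to potential >= 1
  (a non-firing unit receives eps per firing unit).\<close>
definition aval_closed :: "(real \<Rightarrow> real) \<Rightarrow> real \<Rightarrow> nat \<Rightarrow> (nat \<Rightarrow> real) \<Rightarrow> nat set \<Rightarrow> bool" where
  "aval_closed U eps N phi S \<longleftrightarrow> S \<subseteq> {..<N} \<and>
     (\<forall>i<N. i \<notin> S \<longrightarrow> U (phi i) + eps * real (card S) < 1)"

text \<open>The avalanche: the least closed set containing the triggering units
  (= result of iterating the firing process until no new unit crosses).\<close>
definition aval :: "(real \<Rightarrow> real) \<Rightarrow> real \<Rightarrow> nat \<Rightarrow> (nat \<Rightarrow> real) \<Rightarrow> nat set" where
  "aval U eps N phi = \<Inter>{S. trig N phi \<subseteq> S \<and> aval_closed U eps N phi S}"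

definition post :: "(real \<Rightarrow> real) \<Rightarrow> (real \<Rightarrow> real) \<Rightarrow> real \<Rightarrow> nat \<Rightarrow> (nat \<Rightarrow> real) \<Rightarrow> nat \<Rightarrow> real" where
  "post U R eps N phi i =
     (let A = aval U eps N phi in
      if i \<in> A then Jmap U R (eps * (real (card A) - 1)) (phi i)
      else Hmap U (eps * real (card A)) (phi i))"

text \<open>Time until the next avalanche (the largest phase reaches 1).\<close>
definition gap :: "(real \<Rightarrow> real) \<Rightarrow> (real \<Rightarrow> real) \<Rightarrow> real \<Rightarrow> nat \<Rightarrow> (nat \<Rightarrow> real) \<Rightarrow> real" where
  "gap U R eps N phi = 1 - Max (post U R eps N phi ` {..<N})"

definition next_state :: "(real \<Rightarrow> real) \<Rightarrow> (real \<Rightarrow> real) \<Rightarrow> real \<Rightarrow> nat \<Rightarrow> (nat \<Rightarrow> real) \<Rightarrow> nat \<Rightarrow> real" where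
  "next_state U R eps N phi = (\<lambda>i. post U R eps N phi i + gap U R eps N phi)"

text \<open>traj r = state just before the (r+1)-th avalanche.\<close>
definition traj :: "(real \<Rightarrow> real) \<Rightarrow> (real \<Rightarrow> real) \<Rightarrow> real \<Rightarrow> nat \<Rightarrow> (nat \<Rightarrow> real) \<Rightarrow> nat \<Rightarrow> nat \<Rightarrow> real" where
  "traj U R eps N phi r = (next_state U R eps N ^^ r) phi"

text \<open>The state phi realizes the firing sequence F = ((a_1,s_1),...,(a_m,s_m)):
  avalanches 1..m with sizes a_r and subsequent inter-event times s_r, where the
  triggering units do not fire in avalanches 2..m but fire in avalanche m+1.\<close>
definition realizes :: "(real \<Rightarrow> real) \<Rightarrow> (real \<Rightarrow> real) \<Rightarrow> real \<Rightarrow> nat \<Rightarrow> (nat \<Rightarrow> real) \<Rightarrow> (nat \<times> real) list \<Rightarrow> bool" where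
  "realizes U R eps N phi F \<longleftrightarrow> valid_state N phi \<and> F \<noteq> [] \<and>
     (\<forall>r < length F. F ! r = (card (aval U eps N (traj U R eps N phi r)), gap U R eps N (traj U R eps N phi r))) \<and>
     (\<forall>r \<in> {1..<length F}. aval U eps N (traj U R eps N phi r) \<inter> trig N phi = {}) \<and>
     aval U eps N (traj U R eps N phi (length F)) \<inter> trig N phi \<noteq> {}"

definition admissible :: "(real \<Rightarrow> real) \<Rightarrow> (real \<Rightarrow> real) \<Rightarrow> real \<Rightarrow> nat \<Rightarrow> (nat \<times> real) list \<Rightarrow> bool" where
  "admissible U R eps N F \<longleftrightarrow> (\<exists>phi. realizes U R eps N phi F)"

definition trigger_invariant :: "(real \<Rightarrow> real) \<Rightarrow> (real \<Rightarrow> real) \<Rightarrow> real \<Rightarrow> nat \<Rightarrow> (nat \<times> real) list \<Rightarrow> bool" where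
  "trigger_invariant U R eps N F \<longleftrightarrow> (\<exists>phi. realizes U R eps N phi F \<and>
      (\<forall>i \<in> trig N phi. traj U R eps N phi (length F) i = 1))"

text \<open>M_F(phi) = [odot_{r=2}^m (S_{s_r} o H_{a_r eps})] o S_{s_1} o J_{(a_1-1) eps} (phi).\<close>
definition Mmap :: "(real \<Rightarrow> real) \<Rightarrow> (real \<Rightarrow> real) \<Rightarrow> real \<Rightarrow> (nat \<times> real) list \<Rightarrow> real \<Rightarrow> real" where
  "Mmap U R eps F phi =
     foldl (\<lambda>x (a, s). Smap s (Hmap U (eps * real a) x))
       (Smap (snd (hd F)) (Jmap U R (eps * (real (fst (hd F)) - 1)) phi)) (tl F)"

definition invariant_under_return :: "(real \<Rightarrow> real) \<Rightarrow> (real \<Rightarrow> real) \<Rightarrow> real \<Rightarrow> nat \<Rightarrow> nat \<Rightarrow> bool" where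
  "invariant_under_return U R eps N a1 \<longleftrightarrow>
     (\<forall>a \<in> {1..<a1}. \<forall>F. admissible U R eps N F \<and> trigger_invariant U R eps N F \<and> fst (hd F) = a1 \<longrightarrow>
        Mmap U R eps F (Uinv U (1 - real a * eps)) \<ge> Uinv U (1 - real a * eps))"

definition condA :: "(real \<Rightarrow> real) \<Rightarrow> (real \<Rightarrow> real) \<Rightarrow> real \<Rightarrow> nat \<Rightarrow> nat \<Rightarrow> nat \<Rightarrow> bool" where
  "condA U R eps N a1 a \<longleftrightarrow>
     Uinv U (R ((real a1 - 1) * eps)) - Uinv U (R ((real a1 - 1) * eps - real a * eps))
     \<le> Uinv U (1 - (real N - real a1) * eps) - Uinv U (1 - (real N - real a1) * eps - real a * eps)"

definition condB :: "(real \<Rightarrow> real) \<Rightarrow> (real \<Rightarrow> real) \<Rightarrow> real \<Rightarrow> nat \<Rightarrow> nat \<Rightarrow> nat \<Rightarrow> bool" where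
  "condB U R eps N a1 a \<longleftrightarrow>
     Uinv U (R ((real a1 - 1) * eps) + (real N - real a1) * eps)
       - Uinv U (R ((real a1 - 1) * eps - real a * eps) + (real N - real a1) * eps)
     \<le> 1 - Uinv U (1 - real a * eps)"

end

theory Submission
  imports Defs
begin

(* Compare the trigger (a unit at phase 1 firing in the first avalanche) with a unit of the same
   avalanche that started at p = U^-1(1 - a eps).  Both are reset by J and afterwards follow the
   same maps S_s o H_k until the trigger is back at phase 1; M_F(p) is then the phase of the
   comparison unit.  Order preservation shows that every unit fires exactly once in between, so
   after its reset the trigger receives exactly K = (N - a1) eps.  Under icpd the lower phase
      ends above an explicit bound, under dcpd the final phase difference is bounded above;
      both bounds only involve the first-step phases and the total pulse.
   4. locales network and firing_return: avalanches, resets, order preservation and the count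
      of firings during one return; a return is a comparison chain.
   5. Sufficiency: condition A under icpd, or B under dcpd, gives M_F(p) >= p.
   6. Necessity: for a1 = N the synchronous state yields B directly; for a1 < N two clusters
      (locale two_clusters) make M_F(p) tend to the bound in B.  Under dcpd, B implies A. *)

section \<open>The rise function and its inverse\<close>

locale rise =
  fixes U :: "real \<Rightarrow> real"
  assumes rise: "rise_function U"
begin

lemma U_deriv: "x \<in> {0..1} \<Longrightarrow> (U has_real_derivative deriv U x) (at x)"
  using rise unfolding rise_function_def
  by (metis (no_types, lifting) funpow_0 funpow_Suc_right id_apply o_apply)

lemma U_deriv_pos: "x \<in> {0..1} \<Longrightarrow> deriv U x > 0"
  using rise unfolding rise_function_def by blast

lemma U_0: "U 0 = 0" and U_1: "U 1 = 1"
  using rise unfolding rise_function_def by auto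

lemma U_isCont: "x \<in> {0..1} \<Longrightarrow> isCont U x"
  using DERIV_isCont U_deriv by blast

lemma U_cont: "continuous_on {0..1} U"
  by (simp add: U_isCont continuous_at_imp_continuous_on)

lemma U_less: "0 \<le> x \<Longrightarrow> x < y \<Longrightarrow> y \<le> 1 \<Longrightarrow> U x < U y"
  apply (rule DERIV_pos_imp_increasing[of x y U], simp)
  using U_deriv U_deriv_pos by (metis atLeastAtMost_iff order_trans)

lemma U_le: "0 \<le> x \<Longrightarrow> x \<le> y \<Longrightarrow> y \<le> 1 \<Longrightarrow> U x \<le> U y"
  using U_less by (cases "x = y") (auto intro: less_imp_le)

lemma U_le_iff: "x \<in> {0..1} \<Longrightarrow> y \<in> {0..1} \<Longrightarrow> U x \<le> U y \<longleftrightarrow> x \<le> y"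
  using U_less U_le by (meson atLeastAtMost_iff not_le)

lemma U_less_iff: "x \<in> {0..1} \<Longrightarrow> y \<in> {0..1} \<Longrightarrow> U x < U y \<longleftrightarrow> x < y"
  using U_le_iff by (meson not_le)

lemma U_range: "x \<in> {0..1} \<Longrightarrow> U x \<in> {0..1}"
  using U_le[of 0 x] U_le[of x 1] U_0 U_1 by auto

lemma U_inj: "inj_on U {0..1}"
  by (metis U_le_iff inj_onI order_antisym order_refl)

text \<open>By the intermediate value theorem U maps [0,1] onto [0,1], so U^-1 is its inverse there.\<close>
lemma U_image: "U ` {0..1} = {0..1}"
proof
  show "U ` {0..1} \<subseteq> {0..1}" using U_range by auto
  show "{0..1} \<subseteq> U ` {0..1}"
  proof
    fix y :: real assume "y \<in> {0..1}"
    then have "\<exists>x\<ge>0. x \<le> 1 \<and> U x = y"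
      using IVT'[of U 0 y 1] U_0 U_1 U_cont by auto
    then show "y \<in> U ` {0..1}" by auto
  qed
qed

lemma Uinv_range: "y \<in> {0..1} \<Longrightarrow> Uinv U y \<in> {0..1}"
  unfolding Uinv_def using U_image U_inj by (metis the_inv_into_into order_refl)

lemma U_Uinv: "y \<in> {0..1} \<Longrightarrow> U (Uinv U y) = y"
  unfolding Uinv_def using U_image U_inj by (metis f_the_inv_into_f)

lemma Uinv_U: "x \<in> {0..1} \<Longrightarrow> Uinv U (U x) = x"
  unfolding Uinv_def using U_inj by (metis the_inv_into_f_f)

lemma Uinv_le_iff: "x \<in> {0..1} \<Longrightarrow> y \<in> {0..1} \<Longrightarrow> Uinv U x \<le> Uinv U y \<longleftrightarrow> x \<le> y"
  by (metis U_Uinv U_le_iff Uinv_range)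

lemma Uinv_less_iff: "x \<in> {0..1} \<Longrightarrow> y \<in> {0..1} \<Longrightarrow> Uinv U x < Uinv U y \<longleftrightarrow> x < y"
  by (metis U_Uinv U_less_iff Uinv_range)

lemma Uinv_1: "Uinv U 1 = 1"
  using Uinv_U U_1 by (metis atLeastAtMost_iff order_refl zero_le_one)

lemma Uinv_cont: "continuous_on {0..1} (Uinv U)"
  using continuous_on_inv[OF U_cont compact_Icc] Uinv_U U_image by metis

lemma Uinv_isCont: "0 < y \<Longrightarrow> y < 1 \<Longrightarrow> isCont (Uinv U) y"
  using continuous_on_interior[OF Uinv_cont, of y] by auto

lemma Uinv_deriv:
  assumes "0 < y" "y < 1"
  shows "(Uinv U has_real_derivative inverse (deriv U (Uinv U y))) (at y)"
proof (rule DERIV_inverse_function[where f=U and a=0 and b=1])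
  have "Uinv U y \<in> {0..1}" using assms Uinv_range by auto
  then show "(U has_real_derivative deriv U (Uinv U y)) (at (Uinv U y))" "deriv U (Uinv U y) \<noteq> 0"
    using U_deriv U_deriv_pos by (auto simp: less_imp_neq[symmetric])
  show "0 < y" "y < 1" by fact+
  show "\<And>z. 0 < z \<Longrightarrow> z < 1 \<Longrightarrow> U (Uinv U z) = z" using U_Uinv by auto
  show "isCont (Uinv U) y" using Uinv_isCont assms by blast
qed

text \<open>H_e p is defined as long as the raised potential U p + e stays in [0,1].\<close>

lemma H_range: "U p + e \<in> {0..1} \<Longrightarrow> Hmap U e p \<in> {0..1}"
  unfolding Hmap_def by (rule Uinv_range)

lemma U_H: "U p + e \<in> {0..1} \<Longrightarrow> U (Hmap U e p) = U p + e"
  unfolding Hmap_def by (rule U_Uinv)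

lemma H_le: "p \<in> {0..1} \<Longrightarrow> q \<in> {0..1} \<Longrightarrow> p \<le> q \<Longrightarrow> U p + e \<in> {0..1} \<Longrightarrow> U q + e \<in> {0..1}
   \<Longrightarrow> Hmap U e p \<le> Hmap U e q"
  unfolding Hmap_def using Uinv_le_iff[of "U p + e" "U q + e"] U_le[of p q] by simp

lemma H_less: "p \<in> {0..1} \<Longrightarrow> q \<in> {0..1} \<Longrightarrow> p < q \<Longrightarrow> U p + e \<in> {0..1} \<Longrightarrow> U q + e \<in> {0..1}
   \<Longrightarrow> Hmap U e p < Hmap U e q"
  unfolding Hmap_def using Uinv_less_iff[of "U p + e" "U q + e"] U_less[of p q] by simp

lemma H_zero: "p \<in> {0..1} \<Longrightarrow> Hmap U 0 p = p"
  unfolding Hmap_def using Uinv_U by simp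

lemma H_comp: "U p + b \<in> {0..1} \<Longrightarrow> Hmap U a (Hmap U b p) = Hmap U (a + b) p"
  unfolding Hmap_def using U_Uinv[of "U p + b"] by (simp add: add.commute add.left_commute)

lemma H_Uinv: "y \<in> {0..1} \<Longrightarrow> Hmap U e (Uinv U y) = Uinv U (y + e)"
  unfolding Hmap_def using U_Uinv by simp

end

section \<open>icpd and dcpd as monotonicity of Delta H\<close>

context rise
begin

lemma DeltaH_differentiable:
  assumes "0 < x" "0 \<le> d" "0 \<le> e" "U (x + d) + e < 1" "x + d \<le> 1"
  shows "\<exists>D. ((\<lambda>z. DeltaH U z d e) has_real_derivative D) (at x)"
proof -
  have x01: "x \<in> {0..1}" "x + d \<in> {0..1}" using assms by auto
  have Ux: "U x > 0" using U_less[of 0 x] assms U_0 by auto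
  have Uxd: "U x \<le> U (x + d)" using U_le[of x "x + d"] assms by auto
  have shift: "((\<lambda>z. z + d) has_real_derivative 1) (at x)" by (auto intro!: derivative_eq_intros)
  have d1: "((\<lambda>z. U (z + d) + e) has_real_derivative deriv U (x + d) * 1) (at x)"
    using DERIV_add[OF DERIV_chain2[OF U_deriv[OF x01(2)] shift] DERIV_const[of e]] by simp
  have d2: "((\<lambda>z. U z + e) has_real_derivative deriv U x) (at x)"
    using DERIV_add[OF U_deriv[OF x01(1)] DERIV_const[of e]] by simp
  have i1: "(Uinv U has_real_derivative inverse (deriv U (Uinv U (U (x + d) + e)))) (at (U (x + d) + e))"
    by (rule Uinv_deriv) (use Ux Uxd assms in auto)
  have i2: "(Uinv U has_real_derivative inverse (deriv U (Uinv U (U x + e)))) (at (U x + e))"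
    by (rule Uinv_deriv) (use Ux Uxd assms in auto)
  show ?thesis
    unfolding DeltaH_def Hmap_def using DERIV_diff[OF DERIV_chain2[OF i1 d1] DERIV_chain2[OF i2 d2]]
    by blast
qed

lemma DeltaH_continuous:
  assumes "0 \<le> p" "0 \<le> d" "0 \<le> e" "e \<le> 1" "q + d \<le> Uinv U (1 - e)"
  shows "continuous_on {p..q} (\<lambda>z. DeltaH U z d e)"
proof -
  have T: "Uinv U (1 - e) \<in> {0..1}" "U (Uinv U (1 - e)) = 1 - e"
    using Uinv_range[of "1 - e"] U_Uinv[of "1 - e"] assms by auto
  have rng: "z \<in> {0..1} \<and> z + d \<in> {0..1} \<and> U z + e \<in> {0..1} \<and> U (z + d) + e \<in> {0..1}"
    if "z \<in> {p..q}" for z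
  proof -
    have a: "z \<in> {0..1}" "z + d \<in> {0..1}" using that assms T by auto
    have "U (z + d) \<le> 1 - e" using U_le[of "z + d" "Uinv U (1 - e)"] T a assms that by auto
    moreover have "U z \<le> U (z + d)" using U_le[of z "z + d"] a assms by auto
    ultimately show ?thesis using a U_range[of z] U_range[of "z + d"] assms by auto
  qed
  have cU: "continuous_on {p..q} (\<lambda>z. U (f z) + e)"
    if "continuous_on {p..q} f" "\<And>z. z \<in> {p..q} \<Longrightarrow> f z \<in> {0..1}" for f
    by (intro continuous_intros continuous_on_compose2[OF U_cont that(1)]) (use that in auto)
  have c1: "continuous_on {p..q} (\<lambda>z. Uinv U (U (z + d) + e))"
    by (rule continuous_on_compose2[OF Uinv_cont cU[of "\<lambda>z. z + d"]])
      (use rng in \<open>auto intro!: continuous_intros\<close>)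
  have c2: "continuous_on {p..q} (\<lambda>z. Uinv U (U z + e))"
    by (rule continuous_on_compose2[OF Uinv_cont cU[of "\<lambda>z. z"]])
      (use rng in \<open>auto intro!: continuous_intros\<close>)
  show ?thesis unfolding DeltaH_def Hmap_def using continuous_on_diff[OF c1 c2] by simp
qed

text \<open>At interior points of the phi-section of D the derivative within the section is the
  ordinary one, so the sign conditions in icpd/dcpd apply there.\<close>
lemma section_nontrivial:
  assumes "0 \<le> e" "e \<le> 1" "0 \<le> d" "0 < x" "x + d < Uinv U (1 - e)"
  shows "at x within {z. (e, z, d) \<in> cpdDom U} = at x"
proof -
  have T: "Uinv U (1 - e) \<le> 1" using Uinv_range[of "1 - e"] assms by auto
  have "{0<..<Uinv U (1 - e) - d} \<subseteq> {z. (e, z, d) \<in> cpdDom U}"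
    unfolding cpdDom_def using assms(1-3) T by auto
  then have "x \<in> interior {z. (e, z, d) \<in> cpdDom U}"
    by (intro interiorI[of "{0<..<Uinv U (1 - e) - d}"]) (use assms in auto)
  then show ?thesis by (rule at_within_interior)
qed

text \<open>Mean value argument: if c times every derivative of Delta H on D is nonnegative
  (c = 1 for icpd, c = -1 for dcpd), then c times Delta H is increasing in phi.\<close>
lemma DeltaH_mono_by_sign:
  assumes sign: "\<And>x D. (e, x, d) \<in> cpdDom U \<Longrightarrow>
        \<not> trivial_limit (at x within {z. (e, z, d) \<in> cpdDom U}) \<Longrightarrow>
        ((\<lambda>z. DeltaH U z d e) has_real_derivative D) (at x within {z. (e, z, d) \<in> cpdDom U}) \<Longrightarrow>
        0 \<le> c * D"
    and dom: "0 \<le> e" "e \<le> 1" "0 \<le> d" "0 \<le> p" "p \<le> q" "q + d \<le> Uinv U (1 - e)"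
  shows "c * DeltaH U p d e \<le> c * DeltaH U q d e"
proof (rule DERIV_nonneg_imp_increasing_open[OF dom(5)])
  have T: "Uinv U (1 - e) \<in> {0..1}" "U (Uinv U (1 - e)) = 1 - e"
    using Uinv_range[of "1 - e"] U_Uinv[of "1 - e"] dom by auto
  fix x assume x: "p < x" "x < q"
  have xd: "x + d < Uinv U (1 - e)" using x dom by auto
  have "U (x + d) < 1 - e" using U_less[of "x + d" "Uinv U (1 - e)"] T xd x dom by auto
  then obtain D where D: "((\<lambda>z. DeltaH U z d e) has_real_derivative D) (at x)"
    using DeltaH_differentiable[of x d e] x dom xd T by force
  have "(e, x, d) \<in> cpdDom U" unfolding cpdDom_def using x dom xd T by auto
  then have "0 \<le> c * D"
    using sign[of x D] section_nontrivial[of e d x] dom x xd D by simp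
  then show "\<exists>y. ((\<lambda>z. c * DeltaH U z d e) has_real_derivative y) (at x) \<and> 0 \<le> y"
    using DERIV_cmult[OF D, of c] by blast
next
  show "continuous_on {p..q} (\<lambda>z. c * DeltaH U z d e)"
    using DeltaH_continuous[of p d e q] dom by (intro continuous_on_mult continuous_on_const) auto
qed

lemma icpd_mono:
  assumes "icpd U" "0 \<le> e" "e \<le> 1" "0 \<le> d" "0 \<le> p" "p \<le> q" "q + d \<le> Uinv U (1 - e)"
  shows "DeltaH U p d e \<le> DeltaH U q d e"
  using DeltaH_mono_by_sign[of e d 1 p q] assms unfolding icpd_def by simp

lemma dcpd_mono:
  assumes "dcpd U" "0 \<le> e" "e \<le> 1" "0 \<le> d" "0 \<le> p" "p \<le> q" "q + d \<le> Uinv U (1 - e)"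
  shows "DeltaH U q d e \<le> DeltaH U p d e"
  using DeltaH_mono_by_sign[of e d "-1" p q] assms unfolding dcpd_def by simp

end

section \<open>Comparison of two phases driven by the same maps\<close>

context rise
begin

text \<open>One step of the icpd comparison: if y <= x lie below T = U^-1(1 - k - a), then the lower
  phase after a pulse k is at least as far from U^-1(1 - a) as before, measured after the
  remaining pulse a.\<close>
lemma icpd_step:
  assumes icpd: "icpd U" and k: "0 \<le> k" and a: "0 \<le> a" "k + a \<le> 1"
    and y: "0 \<le> y" "y \<le> x" and x: "x \<le> Uinv U (1 - (k + a))"
  shows "Hmap U (k + a) (Uinv U (1 - (k + a)) - (x - y))
           \<le> Hmap U a (Uinv U (1 - a) - (Hmap U k x - Hmap U k y))"
proof -
  define T where "T = Uinv U (1 - (k + a))"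
  define d where "d = x - y"
  have TR: "1 - (k + a) \<in> {0..1}" using k a by auto
  have T01: "T \<in> {0..1}" and UT: "U T = 1 - (k + a)"
    using Uinv_range[OF TR] U_Uinv[OF TR] T_def by auto
  have x01: "x \<in> {0..1}" and y01: "y \<in> {0..1}" using x y T01 T_def by auto
  have d0: "0 \<le> d" and Td: "T - d \<in> {0..1}" using x y T01 T_def d_def by auto
  have Uy: "U y \<le> U x" and Ux: "U x \<le> U T"
    using U_le[of y x] U_le[of x T] x y T01 T_def by auto
  have r1: "U y + k \<in> {0..1}" "U x + k \<in> {0..1}"
    using Uy Ux UT U_range[OF y01] k a by auto
  have UTd: "U (T - d) \<le> U T" using U_le[of "T - d" T] Td T01 d0 by auto
  have r2: "U (T - d) + k \<in> {0..1}" using UTd U_range[OF Td] UT k a by auto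
  have HT: "Hmap U k T = Uinv U (1 - a)"
    unfolding T_def using H_Uinv[OF TR] by (simp add: algebra_simps)
  have "T \<le> Uinv U (1 - k)" using Uinv_le_iff[OF TR, of "1 - k"] T_def k a by auto
  then have "DeltaH U y d k \<le> DeltaH U (T - d) d k"
    using icpd_mono[OF icpd k, of d y "T - d"] a d0 y x T_def d_def by auto
  then have le: "Hmap U k (T - d) \<le> Uinv U (1 - a) - (Hmap U k x - Hmap U k y)"
    unfolding DeltaH_def d_def using HT d_def by simp
  have H1: "Hmap U k (T - d) \<in> {0..1}" using H_range[OF r2] .
  have Hxy: "Hmap U k y \<le> Hmap U k x" using H_le[OF y01 x01 y(2) r1] .
  have T1R: "1 - a \<in> {0..1}" using k a by auto
  have T1: "Uinv U (1 - a) \<in> {0..1}" "U (Uinv U (1 - a)) = 1 - a"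
    using Uinv_range[OF T1R] U_Uinv[OF T1R] by auto
  define z where "z = Uinv U (1 - a) - (Hmap U k x - Hmap U k y)"
  have z01: "z \<in> {0..1}" using le H1 Hxy T1 z_def by auto
  have "U z \<le> U (Uinv U (1 - a))" using U_le[of z "Uinv U (1 - a)"] z01 T1 Hxy z_def by auto
  then have r3: "U z + a \<in> {0..1}" using U_range[OF z01] T1 a by auto
  have r4: "U (Hmap U k (T - d)) + a \<in> {0..1}" using U_H[OF r2] UTd U_range[OF Td] UT k a by auto
  have "Hmap U a (Hmap U k (T - d)) \<le> Hmap U a z"
    using H_le[OF H1 z01 _ r4 r3] le z_def by simp
  moreover have "Hmap U a (Hmap U k (T - d)) = Hmap U (k + a) (T - d)"
    using H_comp[OF r2] by (simp add: add.commute)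
  ultimately show ?thesis using T_def d_def z_def by simp
qed

end

text \<open>Two units with phases x r (the trigger) and y r (the comparison unit) during the avalanches
  r = 1, ..., m - 1 after the first one: the trigger does not fire (U (x r) + k r < 1), both
  receive the pulse k r and then drift for time s r; the trigger is back at phase 1 at step m.\<close>
locale comparison_chain = rise +
  fixes x y k s :: "nat \<Rightarrow> real" and m :: nat
  assumes m_pos: "1 \<le> m"
    and x_range: "\<And>r. 1 \<le> r \<Longrightarrow> r \<le> m \<Longrightarrow> x r \<in> {0..1}"
    and x_step: "\<And>r. 1 \<le> r \<Longrightarrow> r < m \<Longrightarrow> x (Suc r) = Hmap U (k r) (x r) + s r"
    and y_step: "\<And>r. 1 \<le> r \<Longrightarrow> r < m \<Longrightarrow> y (Suc r) = Hmap U (k r) (y r) + s r"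
    and k_nonneg: "\<And>r. 1 \<le> r \<Longrightarrow> r < m \<Longrightarrow> 0 \<le> k r"
    and s_nonneg: "\<And>r. 1 \<le> r \<Longrightarrow> r < m \<Longrightarrow> 0 \<le> s r"
    and x_no_fire: "\<And>r. 1 \<le> r \<Longrightarrow> r < m \<Longrightarrow> U (x r) + k r < 1"
    and x_last: "x m = 1"
    and y_first: "0 \<le> y 1" "y 1 \<le> x 1"
begin

definition pending :: "nat \<Rightarrow> real" where
  "pending r = (\<Sum>j\<in>{r..<m}. k j)"

lemma pending_split: "r < m \<Longrightarrow> pending r = k r + pending (Suc r)"
  unfolding pending_def by (simp add: sum.atLeast_Suc_lessThan)

lemma pending_last: "pending m = 0"
  unfolding pending_def by simp

lemma pending_nonneg: "1 \<le> r \<Longrightarrow> 0 \<le> pending r"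
  unfolding pending_def by (rule sum_nonneg) (use k_nonneg in auto)

lemma y_between: "1 \<le> r \<Longrightarrow> r \<le> m \<Longrightarrow> 0 \<le> y r \<and> y r \<le> x r"
proof (induction r rule: dec_induct)
  case base then show ?case using y_first by auto
next
  case (step n)
  have xn: "x n \<in> {0..1}" using x_range step by auto
  have yn: "y n \<in> {0..1}" using step xn by auto
  have "U (y n) \<le> U (x n)" using U_le[of "y n" "x n"] step xn by auto
  then have r1: "U (y n) + k n \<in> {0..1}" "U (x n) + k n \<in> {0..1}"
    using x_no_fire[of n] k_nonneg[of n] step U_range[OF yn] by auto
  have "0 \<le> Hmap U (k n) (y n)" using H_range[OF r1(1)] by auto
  moreover have "Hmap U (k n) (y n) \<le> Hmap U (k n) (x n)" using H_le[OF yn xn _ r1] step by auto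
  ultimately show ?case using x_step[of n] y_step[of n] s_nonneg[of n] step by auto
qed

text \<open>Since the trigger reaches phase 1 again, its potential plus the pending pulses is at most 1.\<close>
lemma x_potential: "r \<le> m \<Longrightarrow> 1 \<le> r \<Longrightarrow> U (x r) + pending r \<le> 1"
proof (induction r rule: inc_induct)
  case base then show ?case using x_last pending_last U_1 by simp
next
  case (step n)
  have xn: "x n \<in> {0..1}" and xn1: "x (Suc n) \<in> {0..1}" using x_range step by auto
  have r1: "U (x n) + k n \<in> {0..1}"
    using x_no_fire[of n] k_nonneg[of n] step U_range[OF xn] by auto
  have "Hmap U (k n) (x n) \<le> x (Suc n)" using x_step[of n] s_nonneg[of n] step by auto
  then have "U (Hmap U (k n) (x n)) \<le> U (x (Suc n))"
    using U_le[of "Hmap U (k n) (x n)" "x (Suc n)"] H_range[OF r1] xn1 by auto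
  then have "U (x n) + k n \<le> U (x (Suc n))" using U_H[OF r1] by simp
  then show ?case using step pending_split[of n] by simp
qed

lemma pending_le_1: "1 \<le> r \<Longrightarrow> r \<le> m \<Longrightarrow> pending r \<le> 1"
  using x_potential[of r] U_range[OF x_range[of r]] by auto

lemma x_below: "1 \<le> r \<Longrightarrow> r \<le> m \<Longrightarrow> x r \<le> Uinv U (1 - pending r)"
proof -
  assume r: "1 \<le> r" "r \<le> m"
  have xr: "x r \<in> {0..1}" using x_range r by auto
  have "U (x r) \<le> 1 - pending r" using x_potential r by force
  moreover have "1 - pending r \<in> {0..1}" using pending_nonneg pending_le_1 r by auto
  ultimately show ?thesis using Uinv_le_iff[OF U_range[OF xr]] Uinv_U[OF xr] by metis
qed

lemma icpd_chain_bound: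
  assumes icpd: "icpd U"
  shows "r \<le> m \<Longrightarrow> 1 \<le> r \<Longrightarrow> Hmap U (pending r) (Uinv U (1 - pending r) - (x r - y r)) \<le> y m"
proof (induction r rule: inc_induct)
  case base
  have "y m \<in> {0..1}" using y_between[of m] x_range[of m] m_pos by auto
  then show ?case using x_last pending_last Uinv_1 H_zero by simp
next
  case (step n)
  have n: "1 \<le> n" "n < m" using step by auto
  have "Hmap U (pending n) (Uinv U (1 - pending n) - (x n - y n))
      \<le> Hmap U (pending (Suc n)) (Uinv U (1 - pending (Suc n)) - (Hmap U (k n) (x n) - Hmap U (k n) (y n)))"
    using icpd_step[OF icpd k_nonneg[OF n] pending_nonneg[of "Suc n"]] pending_split[OF n(2)]
      pending_le_1[of n] y_between[of n] x_below[of n] n by simp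
  also have "Hmap U (k n) (x n) - Hmap U (k n) (y n) = x (Suc n) - y (Suc n)"
    using x_step[OF n] y_step[OF n] by simp
  finally show ?case using step.IH by simp
qed

lemma dcpd_chain_bound:
  assumes dcpd: "dcpd U"
  shows "r \<le> m \<Longrightarrow> 1 \<le> r \<Longrightarrow> 1 - y m \<le> Hmap U (pending r) (x r) - Hmap U (pending r) (y r)"
proof (induction r rule: inc_induct)
  case base
  have "y m \<in> {0..1}" using y_between[of m] x_range[of m] m_pos by auto
  then show ?case using x_last pending_last H_zero by simp
next
  case (step n)
  have n: "1 \<le> n" "n < m" using step by auto
  define a where "a = pending (Suc n)"
  have pn: "pending n = k n + a" using pending_split[OF n(2)] a_def by simp
  have xn: "x n \<in> {0..1}" using x_range n by auto
  then have yn: "y n \<in> {0..1}" "y n \<le> x n" using y_between[of n] n by auto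
  have a0: "0 \<le> a" "a \<le> 1" using pending_nonneg pending_le_1 n a_def by auto
  have "U (y n) \<le> U (x n)" using U_le[of "y n" "x n"] yn xn by auto
  then have r1: "U (y n) + k n \<in> {0..1}" "U (x n) + k n \<in> {0..1}"
    using x_no_fire[OF n] k_nonneg[OF n] U_range[OF yn(1)] by auto
  define p where "p = Hmap U (k n) (y n)"
  define d where "d = Hmap U (k n) (x n) - Hmap U (k n) (y n)"
  have p0: "0 \<le> p" using H_range[OF r1(1)] p_def by auto
  have d0: "0 \<le> d" using H_le[OF yn(1) xn yn(2) r1] d_def by auto
  have y1: "y (Suc n) = p + s n" using y_step[OF n] p_def by simp
  have x1: "x (Suc n) = p + s n + d" using x_step[OF n] p_def d_def by simp
  have "x (Suc n) \<le> Uinv U (1 - a)" using x_below[of "Suc n"] n a_def by auto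
  then have "DeltaH U (p + s n) d a \<le> DeltaH U p d a"
    using dcpd_mono[OF dcpd a0 d0 p0, of "p + s n"] s_nonneg[OF n] x1 by auto
  also have "DeltaH U p d a = Hmap U (pending n) (x n) - Hmap U (pending n) (y n)"
    unfolding DeltaH_def d_def p_def using H_comp[OF r1(1), of a] H_comp[OF r1(2), of a] pn
    by (simp add: add.commute)
  finally show ?case
    using step.IH x1 y1 a_def unfolding DeltaH_def by (simp add: algebra_simps)
qed

end

section \<open>The network: avalanches, resets and trajectories\<close>

locale network = rise +
  fixes R :: "real \<Rightarrow> real" and eps :: real and N :: nat
  assumes reset: "neuronal_reset R"
    and eps_pos: "0 < eps"
    and coupling_small: "(real N - 1) * eps < 1"
    and N_pos: "1 \<le> N"
begin

abbreviation fired :: "(nat \<Rightarrow> real) \<Rightarrow> nat set" where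
  "fired \<equiv> aval U eps N"

abbreviation phase_after :: "(nat \<Rightarrow> real) \<Rightarrow> nat \<Rightarrow> real" where
  "phase_after \<equiv> post U R eps N"

abbreviation advance :: "(nat \<Rightarrow> real) \<Rightarrow> nat \<Rightarrow> real" where
  "advance \<equiv> next_state U R eps N"

abbreviation orbit :: "(nat \<Rightarrow> real) \<Rightarrow> nat \<Rightarrow> nat \<Rightarrow> real" where
  "orbit \<equiv> traj U R eps N"

definition unit_phases :: "(nat \<Rightarrow> real) \<Rightarrow> bool" where
  "unit_phases \<phi> \<longleftrightarrow> (\<forall>i<N. \<phi> i \<in> {0..1})"

lemma R_mono: "0 \<le> z \<Longrightarrow> z \<le> z' \<Longrightarrow> R z \<le> R z'"
  using reset unfolding neuronal_reset_def by (auto intro: mono_onD)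

lemma R_bounds: "0 \<le> z \<Longrightarrow> 0 \<le> R z \<and> R z \<le> z"
  using reset unfolding neuronal_reset_def by auto

lemma aval_closed_all: "aval_closed U eps N \<phi> {..<N}"
  unfolding aval_closed_def by auto

lemma fired_subset: "fired \<phi> \<subseteq> {..<N}"
  unfolding aval_def using aval_closed_all by (intro Inter_lower) (auto simp: trig_def)

lemma fired_finite: "finite (fired \<phi>)"
  using fired_subset finite_subset by blast

lemma fired_card: "card (fired \<phi>) \<le> N"
  using card_mono[OF _ fired_subset] by fastforce

lemma trig_subset_fired: "trig N \<phi> \<subseteq> fired \<phi>"
  unfolding aval_def by auto

lemma fired_card_pos: "i \<in> fired \<phi> \<Longrightarrow> 1 \<le> card (fired \<phi>)"
  using fired_finite[of \<phi>] by (metis One_nat_def Suc_leI card_gt_0_iff empty_iff)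

lemma not_fired_below:
  assumes i: "i < N" "i \<notin> fired \<phi>"
  shows "U (\<phi> i) + eps * real (card (fired \<phi>)) < 1"
proof -
  obtain S where S: "trig N \<phi> \<subseteq> S" "aval_closed U eps N \<phi> S" "i \<notin> S"
    using i unfolding aval_def by auto
  have "fired \<phi> \<subseteq> S" unfolding aval_def using S by auto
  moreover have "S \<subseteq> {..<N}" using S(2) unfolding aval_closed_def by auto
  ultimately have "card (fired \<phi>) \<le> card S" by (meson card_mono finite_lessThan finite_subset)
  then have "eps * real (card (fired \<phi>)) \<le> eps * real (card S)" using eps_pos by simp
  moreover have "U (\<phi> i) + eps * real (card S) < 1" using S(2,3) i unfolding aval_closed_def by auto
  ultimately show ?thesis by linarith
qed

text \<open>By minimality of the avalanche, every firing unit reaches threshold from the pulses of the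
  other firing units.\<close>
lemma fired_above:
  assumes i: "i \<in> fired \<phi>"
  shows "1 \<le> U (\<phi> i) + eps * (real (card (fired \<phi>)) - 1)"
proof (cases "i \<in> trig N \<phi>")
  case True
  then show ?thesis using U_1 eps_pos fired_card_pos[OF i] unfolding trig_def by simp
next
  case False
  show ?thesis
  proof (rule ccontr)
    assume below: "\<not> ?thesis"
    define S where "S = fired \<phi> - {i}"
    have cS: "real (card S) = real (card (fired \<phi>)) - 1"
      unfolding S_def using fired_card_pos[OF i] i fired_finite
      by (simp add: card_Diff_singleton of_nat_diff)
    have "aval_closed U eps N \<phi> S"
      unfolding aval_closed_def
    proof (intro conjI allI impI)
      show "S \<subseteq> {..<N}" unfolding S_def using fired_subset by auto
      fix j assume j: "j < N" "j \<notin> S"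
      show "U (\<phi> j) + eps * real (card S) < 1"
      proof (cases "j = i")
        case True then show ?thesis using below cS by simp
      next
        case False
        then have "U (\<phi> j) + eps * real (card (fired \<phi>)) < 1"
          using not_fired_below[OF j(1)] j S_def by blast
        then show ?thesis using eps_pos cS by (simp add: right_diff_distrib)
      qed
    qed
    moreover have "trig N \<phi> \<subseteq> S" unfolding S_def using trig_subset_fired False by auto
    ultimately have "fired \<phi> \<subseteq> S" unfolding aval_def by auto
    then show False using i S_def by auto
  qed
qed

lemma fired_eq_trig: "aval_closed U eps N \<phi> (trig N \<phi>) \<Longrightarrow> fired \<phi> = trig N \<phi>"
  using trig_subset_fired unfolding aval_def by auto

lemma post_fired:
  assumes ph: "unit_phases \<phi>" and i: "i \<in> fired \<phi>"
  shows "phase_after \<phi> i = Uinv U (R (U (\<phi> i) + eps * (real (card (fired \<phi>)) - 1) - 1))"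
    and "phase_after \<phi> i \<in> {0..1}"
    and "phase_after \<phi> i < 1"
    and "phase_after \<phi> i \<le> Uinv U (eps * (real (card (fired \<phi>)) - 1))"
proof -
  show eq: "phase_after \<phi> i = Uinv U (R (U (\<phi> i) + eps * (real (card (fired \<phi>)) - 1) - 1))"
    unfolding post_def Jmap_def Let_def using i by simp
  define z where "z = U (\<phi> i) + eps * (real (card (fired \<phi>)) - 1) - 1"
  have z0: "0 \<le> z" using fired_above[OF i] z_def by simp
  have "U (\<phi> i) \<le> 1" using U_range ph fired_subset i unfolding unit_phases_def by force
  then have zle: "z \<le> eps * (real (card (fired \<phi>)) - 1)" using z_def by simp
  have "eps * (real (card (fired \<phi>)) - 1) \<le> eps * (real N - 1)"
    using fired_card[of \<phi>] eps_pos by (simp add: mult_left_mono)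
  then have lt1: "eps * (real (card (fired \<phi>)) - 1) < 1" using coupling_small by (simp add: mult.commute)
  have Rz01: "R z \<in> {0..1}" using R_bounds[OF z0] zle lt1 by auto
  show "phase_after \<phi> i \<in> {0..1}" using eq Uinv_range[OF Rz01] z_def by simp
  show "phase_after \<phi> i < 1"
    using eq Uinv_less_iff[OF Rz01, of 1] Uinv_1 z_def R_bounds[OF z0] zle lt1 by simp
  show "phase_after \<phi> i \<le> Uinv U (eps * (real (card (fired \<phi>)) - 1))"
    using eq Uinv_le_iff[OF Rz01, of "eps * (real (card (fired \<phi>)) - 1)"] z_def R_bounds[OF z0] zle lt1 z0
    by simp
qed

lemma post_not_fired:
  assumes ph: "unit_phases \<phi>" and i: "i < N" "i \<notin> fired \<phi>"
  shows "phase_after \<phi> i = Hmap U (eps * real (card (fired \<phi>))) (\<phi> i)"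
    and "U (\<phi> i) + eps * real (card (fired \<phi>)) \<in> {0..1}"
    and "phase_after \<phi> i \<in> {0..1}"
    and "phase_after \<phi> i < 1"
    and "Uinv U (eps * real (card (fired \<phi>))) \<le> phase_after \<phi> i"
    and "eps * real (card (fired \<phi>)) < 1"
proof -
  show eq: "phase_after \<phi> i = Hmap U (eps * real (card (fired \<phi>))) (\<phi> i)"
    unfolding post_def Let_def using i by simp
  have p01: "\<phi> i \<in> {0..1}" using ph i unfolding unit_phases_def by auto
  have U0: "0 \<le> U (\<phi> i)" using U_range[OF p01] by auto
  have lt: "U (\<phi> i) + eps * real (card (fired \<phi>)) < 1" using not_fired_below i by auto
  have e0: "0 \<le> eps * real (card (fired \<phi>))" using eps_pos by simp
  show r: "U (\<phi> i) + eps * real (card (fired \<phi>)) \<in> {0..1}" using U0 lt e0 by auto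
  show "eps * real (card (fired \<phi>)) < 1" using U0 lt by auto
  show "phase_after \<phi> i \<in> {0..1}" using eq H_range[OF r] by simp
  show "phase_after \<phi> i < 1"
    using eq Uinv_less_iff[OF r, of 1] Uinv_1 lt unfolding Hmap_def by simp
  show "Uinv U (eps * real (card (fired \<phi>))) \<le> phase_after \<phi> i"
    using eq Uinv_le_iff[OF _ r, of "eps * real (card (fired \<phi>))"] e0 lt U0 unfolding Hmap_def by simp
qed

lemma post_range: "unit_phases \<phi> \<Longrightarrow> i < N \<Longrightarrow> phase_after \<phi> i \<in> {0..1} \<and> phase_after \<phi> i < 1"
  using post_fired post_not_fired by (cases "i \<in> fired \<phi>") auto

lemma Max_eqI_lessThan:
  "(\<And>i. i < n \<Longrightarrow> f i \<le> v) \<Longrightarrow> j < n \<Longrightarrow> f j = v \<Longrightarrow> Max (f ` {..<(n::nat)}) = (v::real)"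
  by (rule Max_eqI) auto

lemma Max_post:
  assumes "unit_phases \<phi>"
  shows "Max (phase_after \<phi> ` {..<N}) \<in> phase_after \<phi> ` {..<N}"
    and "0 \<le> Max (phase_after \<phi> ` {..<N})" "Max (phase_after \<phi> ` {..<N}) < 1"
proof -
  have "phase_after \<phi> ` {..<N} \<noteq> {}" using N_pos by (auto simp: lessThan_empty_iff)
  then show m: "Max (phase_after \<phi> ` {..<N}) \<in> phase_after \<phi> ` {..<N}" using Max_in by simp
  show "0 \<le> Max (phase_after \<phi> ` {..<N})" "Max (phase_after \<phi> ` {..<N}) < 1"
    using m post_range[OF assms] by auto
qed

lemma gap_pos: "unit_phases \<phi> \<Longrightarrow> 0 < gap U R eps N \<phi>"
  unfolding gap_def using Max_post by fastforce

lemma advance_unit_phases: "unit_phases \<phi> \<Longrightarrow> unit_phases (advance \<phi>)"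
  unfolding unit_phases_def next_state_def gap_def
proof (intro allI impI)
  fix i assume ph: "\<forall>i<N. \<phi> i \<in> {0..1}" and i: "i < N"
  then have "unit_phases \<phi>" unfolding unit_phases_def by simp
  then show "phase_after \<phi> i + (1 - Max (phase_after \<phi> ` {..<N})) \<in> {0..1}"
    using Max_post[of \<phi>] post_range[of \<phi> i] i by auto
qed

lemma orbit_0: "orbit \<phi> 0 = \<phi>"
  unfolding traj_def by simp

lemma orbit_Suc: "orbit \<phi> (Suc r) = advance (orbit \<phi> r)"
  unfolding traj_def by simp

lemma orbit_unit_phases: "unit_phases \<phi> \<Longrightarrow> unit_phases (orbit \<phi> r)"
  by (induction r) (auto simp: orbit_0 orbit_Suc advance_unit_phases)

lemma valid_unit_phases: "valid_state N \<phi> \<Longrightarrow> unit_phases \<phi>"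
  unfolding valid_state_def unit_phases_def by auto

end

context network
begin

lemma advance_le_iff: "advance \<psi> u \<le> advance \<psi> v \<longleftrightarrow> phase_after \<psi> u \<le> phase_after \<psi> v"
  and advance_less_iff: "advance \<psi> u < advance \<psi> v \<longleftrightarrow> phase_after \<psi> u < phase_after \<psi> v"
  unfolding next_state_def by simp_all

lemma order_nonfiring_reference:
  assumes ph: "unit_phases \<psi>" and i0: "i0 < N" "i0 \<notin> fired \<psi>" and u: "u < N"
  shows "\<psi> u \<le> \<psi> i0 \<Longrightarrow> u \<notin> fired \<psi>"
    and "\<psi> u \<le> \<psi> i0 \<Longrightarrow> advance \<psi> u \<le> advance \<psi> i0"
    and "u \<in> fired \<psi> \<Longrightarrow> advance \<psi> u \<le> advance \<psi> i0"
    and "\<psi> i0 < \<psi> u \<Longrightarrow> u \<notin> fired \<psi> \<Longrightarrow> advance \<psi> i0 < advance \<psi> u"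
proof -
  have pu: "\<psi> u \<in> {0..1}" "\<psi> i0 \<in> {0..1}" using ph u i0 unfolding unit_phases_def by auto
  have below: "U (\<psi> i0) + eps * real (card (fired \<psi>)) < 1" using not_fired_below i0 by blast
  show nf: "u \<notin> fired \<psi>" if le: "\<psi> u \<le> \<psi> i0"
  proof
    assume "u \<in> fired \<psi>"
    then have "1 \<le> U (\<psi> u) + eps * (real (card (fired \<psi>)) - 1)" by (rule fired_above)
    moreover have "U (\<psi> u) \<le> U (\<psi> i0)" using U_le[of "\<psi> u" "\<psi> i0"] pu le by auto
    ultimately show False using below eps_pos by (simp add: right_diff_distrib)
  qed
  show "advance \<psi> u \<le> advance \<psi> i0" if le: "\<psi> u \<le> \<psi> i0"
    using H_le[OF pu le post_not_fired(2)[OF ph u nf[OF le]] post_not_fired(2)[OF ph i0]]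
      post_not_fired(1)[OF ph u nf[OF le]] post_not_fired(1)[OF ph i0] advance_le_iff by simp
  show "advance \<psi> u \<le> advance \<psi> i0" if uin: "u \<in> fired \<psi>"
  proof -
    have "0 \<le> eps * (real (card (fired \<psi>)) - 1)" using fired_card_pos[OF uin] eps_pos by simp
    then have "Uinv U (eps * (real (card (fired \<psi>)) - 1)) < Uinv U (eps * real (card (fired \<psi>)))"
      using Uinv_less_iff[of "eps * (real (card (fired \<psi>)) - 1)" "eps * real (card (fired \<psi>))"]
        post_not_fired(6)[OF ph i0] eps_pos by (simp add: right_diff_distrib)
    then show ?thesis
      using post_fired(4)[OF ph uin] post_not_fired(5)[OF ph i0] advance_le_iff by simp
  qed
  show "advance \<psi> i0 < advance \<psi> u" if lt: "\<psi> i0 < \<psi> u" and nf: "u \<notin> fired \<psi>"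
    using H_less[OF pu(2,1) lt post_not_fired(2)[OF ph i0] post_not_fired(2)[OF ph u nf]]
      post_not_fired(1)[OF ph u nf] post_not_fired(1)[OF ph i0] advance_less_iff by simp
qed

text \<open>Avalanche triggered by i0 (phase 1): i0 receives the largest reset, so all firing units end
  behind it, while the non-firing units end ahead of it.\<close>
lemma order_triggering_reference:
  assumes ph: "unit_phases \<phi>" and i0: "i0 \<in> trig N \<phi>"
  shows "u \<in> fired \<phi> \<Longrightarrow> advance \<phi> u \<le> advance \<phi> i0"
    and "u < N \<Longrightarrow> u \<notin> fired \<phi> \<Longrightarrow> advance \<phi> i0 < advance \<phi> u"
proof -
  have i0A: "i0 \<in> fired \<phi>" using i0 trig_subset_fired by auto
  define c where "c = eps * (real (card (fired \<phi>)) - 1)"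
  have c0: "0 \<le> c" using fired_card_pos[OF i0A] eps_pos c_def by simp
  have "c \<le> (real N - 1) * eps"
    using fired_card[of \<phi>] eps_pos c_def by (simp add: mult.commute mult_left_mono)
  then have c1: "c < 1" using coupling_small by simp
  have Rc: "0 \<le> R c" "R c \<le> c" using R_bounds[OF c0] by auto
  have reset_i0: "phase_after \<phi> i0 = Uinv U (R c)"
    using post_fired(1)[OF ph i0A] i0 U_1 c_def unfolding trig_def by simp
  show "advance \<phi> u \<le> advance \<phi> i0" if uA: "u \<in> fired \<phi>"
  proof -
    define z where "z = U (\<phi> u) + c - 1"
    have "\<phi> u \<in> {0..1}" using ph uA fired_subset unfolding unit_phases_def by blast
    then have zc: "z \<le> c" using U_range z_def by force
    have z0: "0 \<le> z" using fired_above[OF uA] z_def c_def by simp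
    have "Uinv U (R z) \<le> Uinv U (R c)"
      using Uinv_le_iff[of "R z" "R c"] R_bounds[OF z0] R_mono[OF z0 zc] Rc zc c1 by simp
    then show ?thesis using post_fired(1)[OF ph uA] reset_i0 advance_le_iff z_def c_def by simp
  qed
  show "advance \<phi> i0 < advance \<phi> u" if uN: "u < N" and nf: "u \<notin> fired \<phi>"
  proof -
    have "Uinv U (R c) < Uinv U (eps * real (card (fired \<phi>)))"
      using Uinv_less_iff[of "R c" "eps * real (card (fired \<phi>))"] post_not_fired(6)[OF ph uN nf]
        Rc c_def c1 eps_pos c0 by (simp add: right_diff_distrib)
    then show ?thesis using post_not_fired(5)[OF ph uN nf] reset_i0 advance_less_iff by simp
  qed
qed

end

context network
begin

text \<open>Phase right after a first avalanche of size a1 of a firing unit whose phase before it was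
  U^-1(1 - a eps); a = 0 is the trigger itself.\<close>
definition reset_phase :: "nat \<Rightarrow> nat \<Rightarrow> real" where
  "reset_phase a1 a = Uinv U (R ((real a1 - 1) * eps - real a * eps))"

lemma reset_phase_props:
  assumes "a < a1" "a1 \<le> N"
  shows "reset_phase a1 a \<in> {0..1}"
    and "U (reset_phase a1 a) = R ((real a1 - 1) * eps - real a * eps)"
    and "reset_phase a1 a \<le> reset_phase a1 0"
    and "R ((real a1 - 1) * eps) \<le> (real a1 - 1) * eps"
proof -
  define c where "c = (real a1 - 1) * eps"
  have "real a * eps \<le> c" using assms eps_pos unfolding c_def by (simp add: mult_right_mono)
  then have z0: "0 \<le> c - real a * eps" by simp
  have c0: "0 \<le> c" using z0 eps_pos by (smt (verit) of_nat_0_le_iff mult_nonneg_nonneg)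
  have "c \<le> (real N - 1) * eps" using assms eps_pos unfolding c_def by (simp add: mult_right_mono)
  then have c1: "c < 1" using coupling_small by simp
  have Rc: "R c \<in> {0..1}" "R c \<le> c" using R_bounds[OF c0] c1 by auto
  have Rca: "R (c - real a * eps) \<in> {0..1}" "R (c - real a * eps) \<le> R c"
    using R_bounds[OF z0] R_mono[OF z0, of c] Rc eps_pos by auto
  show "reset_phase a1 a \<in> {0..1}" using Uinv_range[OF Rca(1)] unfolding reset_phase_def c_def .
  show "U (reset_phase a1 a) = R ((real a1 - 1) * eps - real a * eps)"
    using U_Uinv[OF Rca(1)] unfolding reset_phase_def c_def .
  show "reset_phase a1 a \<le> reset_phase a1 0"
    using Uinv_le_iff[OF Rca(1) Rc(1)] Rca(2) unfolding reset_phase_def c_def by simp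
  show "R ((real a1 - 1) * eps) \<le> (real a1 - 1) * eps" using Rc c_def by simp
qed

lemma J_first_avalanche:
  assumes "real a * eps \<le> 1"
  shows "Jmap U R (eps * (real a1 - 1)) (Uinv U (1 - real a * eps)) = reset_phase a1 a"
proof -
  have "1 - real a * eps \<in> {0..1}" using assms eps_pos by simp
  then show ?thesis
    unfolding Jmap_def reset_phase_def using U_Uinv by (simp add: algebra_simps)
qed

end

section \<open>One return of the trigger\<close>

locale firing_return = network +
  fixes \<phi> :: "nat \<Rightarrow> real" and F :: "(nat \<times> real) list" and i0 :: nat
  assumes realizes: "realizes U R eps N \<phi> F"
    and returns: "\<forall>i\<in>trig N \<phi>. orbit \<phi> (length F) i = 1"
    and trigger: "i0 \<in> trig N \<phi>"
begin

abbreviation avalanche :: "nat \<Rightarrow> nat set" where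
  "avalanche r \<equiv> fired (orbit \<phi> r)"

definition earlier :: "nat \<Rightarrow> nat set" where
  "earlier r = (\<Union>s<r. avalanche s)"

lemma F_nth: "r < length F \<Longrightarrow> F ! r = (card (avalanche r), gap U R eps N (orbit \<phi> r))"
  using realizes unfolding realizes_def by auto

lemma length_pos: "1 \<le> length F"
  using realizes unfolding realizes_def by (cases F) auto

lemma trigger_N: "i0 < N" and trigger_at_1: "\<phi> i0 = 1"
  using trigger unfolding trig_def by auto

lemma orbit_phases: "unit_phases (orbit \<phi> r)"
  using realizes orbit_unit_phases valid_unit_phases unfolding realizes_def by blast

lemma trigger_silent: "1 \<le> r \<Longrightarrow> r < length F \<Longrightarrow> i0 \<notin> avalanche r"
  using realizes trigger unfolding realizes_def by auto

lemma behind_trigger: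
  assumes "1 \<le> r" "r \<le> length F" "u < N"
  shows "(u \<in> earlier r \<longrightarrow> orbit \<phi> r u \<le> orbit \<phi> r i0)
       \<and> (u \<notin> earlier r \<longrightarrow> orbit \<phi> r i0 < orbit \<phi> r u)"
  using assms
proof (induction r arbitrary: u rule: dec_induct)
  case base
  have "earlier 1 = avalanche 0" unfolding earlier_def by (simp add: lessThan_Suc)
  then show ?case
    using order_triggering_reference[OF orbit_phases[of 0]] trigger base
    by (auto simp: orbit_0 orbit_Suc)
next
  case (step n)
  have silent: "i0 \<notin> avalanche n" using trigger_silent step by auto
  have earlier_Suc: "earlier (Suc n) = earlier n \<union> avalanche n"
    unfolding earlier_def by (auto simp: lessThan_Suc)
  show ?case
    using step.IH step.prems order_nonfiring_reference[OF orbit_phases trigger_N silent step.prems(2)]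
    unfolding earlier_Suc orbit_Suc by auto
qed

lemma avalanches_disjoint: "i < length F \<Longrightarrow> j < length F \<Longrightarrow> i < j \<Longrightarrow> avalanche i \<inter> avalanche j = {}"
proof -
  assume ij: "i < length F" "j < length F" "i < j"
  have "u \<notin> avalanche j" if u: "u \<in> avalanche i" for u
  proof -
    have uN: "u < N" using u fired_subset by auto
    have "u \<in> earlier j" using u ij unfolding earlier_def by auto
    then show ?thesis
      using behind_trigger[of j u] ij uN
        order_nonfiring_reference(1)[OF orbit_phases trigger_N trigger_silent uN] by auto
  qed
  then show ?thesis by auto
qed

lemma earlier_all: "earlier (length F) = {..<N}"
proof
  show "earlier (length F) \<subseteq> {..<N}" unfolding earlier_def using fired_subset by auto
  show "{..<N} \<subseteq> earlier (length F)"
  proof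
    fix u assume "u \<in> {..<N}"
    moreover have "orbit \<phi> (length F) i0 = 1" using returns trigger by auto
    moreover have "orbit \<phi> (length F) u \<le> 1"
      using orbit_phases \<open>u \<in> {..<N}\<close> unfolding unit_phases_def by auto
    ultimately show "u \<in> earlier (length F)" using behind_trigger[of "length F" u] length_pos by force
  qed
qed

lemma firing_count: "card (avalanche 0) + (\<Sum>r\<in>{1..<length F}. card (avalanche r)) = N"
proof -
  have "N = card (earlier (length F))" using earlier_all by simp
  also have "\<dots> = (\<Sum>r<length F. card (avalanche r))"
    unfolding earlier_def
  proof (rule card_UN_disjoint)
    show "\<forall>i\<in>{..<length F}. \<forall>j\<in>{..<length F}. i \<noteq> j \<longrightarrow> avalanche i \<inter> avalanche j = {}"
      using avalanches_disjoint by (metis Int_commute lessThan_iff linorder_neqE_nat)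
  qed (use fired_finite in auto)
  also have "\<dots> = card (avalanche 0) + (\<Sum>r\<in>{1..<length F}. card (avalanche r))"
    using length_pos by (simp add: lessThan_atLeast0 sum.atLeast_Suc_lessThan Suc_le_eq)
  finally show ?thesis by simp
qed

end

context firing_return
begin

lemma first_size: "fst (hd F) = card (avalanche 0)"
  using F_nth[of 0] length_pos by (simp add: hd_conv_nth Suc_le_eq)

lemma first_size_le: "card (avalanche 0) \<le> N"
  using firing_count by linarith

definition trigger_phase :: "nat \<Rightarrow> real" where
  "trigger_phase r = orbit \<phi> r i0"

definition pulse :: "nat \<Rightarrow> real" where
  "pulse r = eps * real (card (avalanche r))"

definition drift :: "nat \<Rightarrow> real" where
  "drift r = gap U R eps N (orbit \<phi> r)"

text \<open>Phase, after r avalanches, of a unit that fired in the first avalanche starting from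
  phase U^-1(1 - a eps) and then followed the maps of F (the partial products of M_F).\<close>
definition comparison_phase :: "nat \<Rightarrow> nat \<Rightarrow> real" where
  "comparison_phase a r =
     foldl (\<lambda>v (b, t). Smap t (Hmap U (eps * real b) v))
       (Smap (drift 0) (reset_phase (card (avalanche 0)) a)) (take (r - 1) (tl F))"

lemma comparison_phase_Mmap:
  assumes "real a * eps \<le> 1"
  shows "Mmap U R eps F (Uinv U (1 - real a * eps)) = comparison_phase a (length F)"
proof -
  have "snd (hd F) = drift 0" "fst (hd F) = card (avalanche 0)"
    using F_nth[of 0] length_pos first_size by (simp_all add: hd_conv_nth Suc_le_eq drift_def orbit_0)
  then show ?thesis
    unfolding Mmap_def comparison_phase_def using J_first_avalanche[OF assms]
    by (simp add: case_prod_beta mult.commute)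
qed

lemma comparison_phase_step:
  assumes "1 \<le> r" "r < length F"
  shows "comparison_phase a (Suc r) = Hmap U (pulse r) (comparison_phase a r) + drift r"
proof -
  have lt: "r - 1 < length (tl F)" using assms by simp
  have "take r (tl F) = take (r - 1) (tl F) @ [F ! r]"
    using take_Suc_conv_app_nth[OF lt] nth_tl[OF lt] assms by simp
  then show ?thesis
    using F_nth[of r] assms unfolding comparison_phase_def pulse_def drift_def Smap_def by simp
qed

lemma trigger_phase_step:
  assumes "1 \<le> r" "r < length F"
  shows "trigger_phase (Suc r) = Hmap U (pulse r) (trigger_phase r) + drift r"
  using post_not_fired(1)[OF orbit_phases trigger_N trigger_silent[OF assms]]
  unfolding trigger_phase_def pulse_def drift_def by (simp add: orbit_Suc next_state_def)

lemma trigger_phase_1: "trigger_phase 1 = reset_phase (card (avalanche 0)) 0 + drift 0"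
proof -
  have "i0 \<in> avalanche 0" using trigger trig_subset_fired by (auto simp: orbit_0)
  then have "phase_after \<phi> i0 = reset_phase (card (avalanche 0)) 0"
    unfolding post_def Let_def Jmap_def reset_phase_def
    using trigger_at_1 U_1 by (simp add: orbit_0 mult.commute)
  then show ?thesis
    unfolding trigger_phase_def drift_def by (simp add: orbit_0 orbit_Suc next_state_def)
qed

lemma comparison_phase_1: "comparison_phase a 1 = reset_phase (card (avalanche 0)) a + drift 0"
  unfolding comparison_phase_def Smap_def by simp

text \<open>After its reset the trigger receives one pulse eps from every unit that did not fire in
  the first avalanche.\<close>
lemma pulses_after_reset: "(\<Sum>r\<in>{1..<length F}. pulse r) = (real N - real (card (avalanche 0))) * eps"
proof -
  have "(\<Sum>r\<in>{1..<length F}. pulse r) = eps * real (\<Sum>r\<in>{1..<length F}. card (avalanche r))"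
    unfolding pulse_def by (simp add: sum_distrib_left)
  also have "real (\<Sum>r\<in>{1..<length F}. card (avalanche r)) = real N - real (card (avalanche 0))"
    using firing_count by (metis add_diff_cancel_left' of_nat_add)
  finally show ?thesis by simp
qed

lemma return_comparison_chain:
  assumes "a < card (avalanche 0)"
  shows "comparison_chain U trigger_phase (comparison_phase a) pulse drift (length F)"
proof
  show "1 \<le> length F" by (rule length_pos)
  show "trigger_phase r \<in> {0..1}" for r
    using orbit_phases trigger_N unfolding trigger_phase_def unit_phases_def by auto
  show "trigger_phase (Suc r) = Hmap U (pulse r) (trigger_phase r) + drift r"
    and "comparison_phase a (Suc r) = Hmap U (pulse r) (comparison_phase a r) + drift r"
    if "1 \<le> r" "r < length F" for r
    using trigger_phase_step comparison_phase_step that by auto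
  show "0 \<le> pulse r" for r unfolding pulse_def using eps_pos by simp
  show "0 \<le> drift r" for r using gap_pos[OF orbit_phases] unfolding drift_def by (simp add: less_imp_le)
  show "U (trigger_phase r) + pulse r < 1" if "1 \<le> r" "r < length F" for r
    using not_fired_below[OF trigger_N trigger_silent[OF that]] unfolding trigger_phase_def pulse_def .
  show "trigger_phase (length F) = 1" using returns trigger unfolding trigger_phase_def by auto
  have "reset_phase (card (avalanche 0)) a \<in> {0..1}"
    "reset_phase (card (avalanche 0)) a \<le> reset_phase (card (avalanche 0)) 0"
    using reset_phase_props[OF assms first_size_le] by auto
  then show "0 \<le> comparison_phase a 1" "comparison_phase a 1 \<le> trigger_phase 1"
    unfolding comparison_phase_1 trigger_phase_1
    using gap_pos[OF orbit_phases[of 0]] by (auto simp: drift_def orbit_0)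
qed

end

section \<open>Sufficiency\<close>

context network
begin

lemma pulse_lt_1: "a < N \<Longrightarrow> real a * eps < 1"
proof -
  assume "a < N"
  then have "real a * eps \<le> (real N - 1) * eps" using eps_pos by (simp add: mult_right_mono)
  then show ?thesis using coupling_small by simp
qed

text \<open>Conditions A and B in terms of the reset phases; K = (N - a1) eps is the total pulse a unit
  of the first avalanche receives before the trigger fires again.\<close>
lemma condA_reset_phase:
  "condA U R eps N a1 a \<longleftrightarrow>
     reset_phase a1 0 - reset_phase a1 a
       \<le> Uinv U (1 - (real N - real a1) * eps) - Uinv U (1 - (real N - real a1) * eps - real a * eps)"
  unfolding condA_def reset_phase_def by simp

lemma condB_reset_phase:
  assumes "a < a1" "a1 \<le> N"
  shows "condB U R eps N a1 a \<longleftrightarrow>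
     Hmap U ((real N - real a1) * eps) (reset_phase a1 0)
       - Hmap U ((real N - real a1) * eps) (reset_phase a1 a) \<le> 1 - Uinv U (1 - real a * eps)"
  unfolding condB_def Hmap_def
  using reset_phase_props(2)[OF assms] reset_phase_props(2)[of 0 a1] assms by simp

end

context firing_return
begin

lemma sufficiency_icpd:
  assumes icpd: "icpd U" and a: "1 \<le> a" "a < card (avalanche 0)"
    and A: "condA U R eps N (card (avalanche 0)) a"
  shows "Uinv U (1 - real a * eps) \<le> Mmap U R eps F (Uinv U (1 - real a * eps))"
proof -
  interpret chain: comparison_chain U trigger_phase "comparison_phase a" pulse drift "length F"
    using return_comparison_chain[OF a(2)] .
  define a1 where "a1 = card (avalanche 0)"
  define K where "K = (real N - real a1) * eps"
  have a1N: "a1 \<le> N" using first_size_le a1_def by simp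
  have pend: "chain.pending 1 = K"
    unfolding chain.pending_def K_def a1_def using pulses_after_reset .
  have "(real a + 1) * eps \<le> real a1 * eps" using a eps_pos a1_def by (simp add: mult_right_mono)
  then have aK: "K + real a * eps \<le> (real N - 1) * eps" unfolding K_def by (simp add: algebra_simps)
  have K0: "0 \<le> K" using a1N eps_pos K_def by simp
  have "0 \<le> real a * eps" using eps_pos by simp
  then have KR: "1 - K \<in> {0..1}" "1 - K - real a * eps \<in> {0..1}"
    using aK K0 coupling_small by auto
  define T where "T = Uinv U (1 - K)"
  define w where "w = Uinv U (1 - K - real a * eps)"
  define d where "d = reset_phase a1 0 - reset_phase a1 a"
  have w: "w \<in> {0..1}" "U w = 1 - K - real a * eps" using Uinv_range U_Uinv KR w_def by auto
  have T: "T \<in> {0..1}" "U T = 1 - K" using Uinv_range U_Uinv KR T_def by auto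
  have d0: "0 \<le> d" using reset_phase_props(3)[OF _ a1N] a d_def a1_def by simp
  have wd: "w \<le> T - d" using A unfolding condA_reset_phase a1_def d_def T_def w_def K_def by simp
  then have Td: "T - d \<in> {0..1}" using w T d0 by auto
  have "U (T - d) \<le> U T" using U_le[of "T - d" T] Td T d0 by auto
  then have "Hmap U K w \<le> Hmap U K (T - d)"
    using H_le[OF w(1) Td wd, of K] w T U_range[OF Td] K0 KR \<open>0 \<le> real a * eps\<close> by auto
  also have "Hmap U K (T - d) \<le> comparison_phase a (length F)"
    using chain.icpd_chain_bound[OF icpd chain.m_pos] pend trigger_phase_1 comparison_phase_1
    unfolding T_def d_def a1_def by simp
  finally show ?thesis
    using comparison_phase_Mmap[of a] H_Uinv[of "1 - K - real a * eps" K] KR w_def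
      pulse_lt_1[of a] a a1N a1_def by simp
qed

lemma sufficiency_dcpd:
  assumes dcpd: "dcpd U" and a: "1 \<le> a" "a < card (avalanche 0)"
    and B: "condB U R eps N (card (avalanche 0)) a"
  shows "Uinv U (1 - real a * eps) \<le> Mmap U R eps F (Uinv U (1 - real a * eps))"
proof -
  interpret chain: comparison_chain U trigger_phase "comparison_phase a" pulse drift "length F"
    using return_comparison_chain[OF a(2)] .
  define a1 where "a1 = card (avalanche 0)"
  define K where "K = (real N - real a1) * eps"
  define x0 where "x0 = reset_phase a1 0"
  define y0 where "y0 = reset_phase a1 a"
  have a1N: "a1 \<le> N" using first_size_le a1_def by simp
  have pend: "chain.pending 1 = K"
    unfolding chain.pending_def K_def a1_def using pulses_after_reset .
  have K: "0 \<le> K" "K \<le> 1" using chain.pending_nonneg[of 1] chain.pending_le_1[of 1] chain.m_pos pend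
    by auto
  have y0: "0 \<le> y0" "y0 \<le> x0"
    using reset_phase_props(1,3)[OF _ a1N, of a] a unfolding x0_def y0_def a1_def by auto
  have "x0 + drift 0 \<le> Uinv U (1 - K)"
    using chain.x_below[of 1] chain.m_pos pend trigger_phase_1 unfolding x0_def a1_def by simp
  then have "DeltaH U (y0 + drift 0) (x0 - y0) K \<le> DeltaH U y0 (x0 - y0) K"
    using dcpd_mono[OF dcpd K, of "x0 - y0" y0 "y0 + drift 0"] y0 chain.s_nonneg[of 0]
      gap_pos[OF orbit_phases[of 0]] by (simp add: drift_def)
  then have "1 - comparison_phase a (length F) \<le> Hmap U K x0 - Hmap U K y0"
    using chain.dcpd_chain_bound[OF dcpd chain.m_pos] pend trigger_phase_1 comparison_phase_1
    unfolding DeltaH_def x0_def y0_def a1_def by (simp add: algebra_simps)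
  also have "\<dots> \<le> 1 - Uinv U (1 - real a * eps)"
    using B condB_reset_phase[OF _ a1N, of a] a unfolding x0_def y0_def K_def a1_def by simp
  finally show ?thesis
    using comparison_phase_Mmap[of a] pulse_lt_1[of a] a a1N a1_def by simp
qed

end

section \<open>Necessity\<close>

context rise
begin

text \<open>Under dcpd, a bound on the phase difference after the pulse K transfers back to a bound
  before the pulse; this turns condition B into condition A.\<close>
lemma dcpd_transfer:
  assumes dcpd: "dcpd U" and K: "0 \<le> K" and b: "0 \<le> b" "K + b \<le> 1"
    and y: "0 \<le> y" "y \<le> x" and x: "x \<le> Uinv U (1 - K)"
    and diff: "Hmap U K x - Hmap U K y \<le> 1 - Uinv U (1 - b)"
  shows "x - y \<le> Uinv U (1 - K) - Uinv U (1 - K - b)"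
proof (rule ccontr)
  define T where "T = Uinv U (1 - K)"
  define w where "w = Uinv U (1 - K - b)"
  assume "\<not> ?thesis"
  then have lt: "T - (x - y) < w" unfolding T_def w_def by simp
  have KR: "1 - K \<in> {0..1}" "1 - K - b \<in> {0..1}" using K b by auto
  have T: "T \<in> {0..1}" "U T = 1 - K" using Uinv_range U_Uinv KR T_def by auto
  have w: "w \<in> {0..1}" "U w = 1 - K - b" using Uinv_range U_Uinv KR w_def by auto
  have Td: "T - (x - y) \<in> {0..1}" using x y T lt w unfolding T_def by auto
  have "DeltaH U (T - (x - y)) (x - y) K \<le> DeltaH U y (x - y) K"
    using dcpd_mono[OF dcpd K, of "x - y" y "T - (x - y)"] x y T K b T_def by auto
  moreover have "Hmap U K T = 1" unfolding Hmap_def using T Uinv_1 by simp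
  ultimately have le: "Uinv U (1 - b) \<le> Hmap U K (T - (x - y))"
    using diff unfolding DeltaH_def by simp
  have r1: "U w + K \<in> {0..1}" using w K b by auto
  have "U (T - (x - y)) \<le> U w" using U_le[of "T - (x - y)" w] Td w lt by auto
  then have r2: "U (T - (x - y)) + K \<in> {0..1}" using U_range[OF Td] r1 K by auto
  have "Hmap U K (T - (x - y)) < Hmap U K w" using H_less[OF Td w(1) lt r2 r1] .
  moreover have "Hmap U K w = Uinv U (1 - b)" unfolding Hmap_def using w by simp
  ultimately show False using le by simp
qed

end

context network
begin

lemma dcpd_condB_imp_condA:
  assumes dcpd: "dcpd U" and a: "a < a1" "a1 \<le> N" and B: "condB U R eps N a1 a"
  shows "condA U R eps N a1 a"
proof -
  define K where "K = (real N - real a1) * eps"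
  have "(real a + 1) * eps \<le> real a1 * eps" using a eps_pos by (simp add: mult_right_mono)
  then have aK: "K + real a * eps \<le> (real N - 1) * eps" unfolding K_def by (simp add: algebra_simps)
  have K0: "0 \<le> K" using a eps_pos K_def by simp
  have b: "0 \<le> real a * eps" "K + real a * eps \<le> 1" using eps_pos aK coupling_small by auto
  have c: "R ((real a1 - 1) * eps) \<le> 1 - K"
    using reset_phase_props(4)[OF a] aK coupling_small unfolding K_def by (simp add: algebra_simps)
  have x0: "reset_phase a1 0 \<in> {0..1}" "U (reset_phase a1 0) = R ((real a1 - 1) * eps)"
    using reset_phase_props(1,2)[of 0 a1] a by auto
  have "1 - K \<in> {0..1}" using K0 b by auto
  then have "reset_phase a1 0 \<le> Uinv U (1 - K)"
    using Uinv_le_iff[OF U_range[OF x0(1)], of "1 - K"] Uinv_U[OF x0(1)] x0(2) c by simp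
  then show ?thesis
    using dcpd_transfer[OF dcpd K0 b] reset_phase_props(1,3)[OF a] B
    unfolding condA_reset_phase condB_reset_phase[OF a] K_def by simp
qed

lemma gap_eqI:
  assumes "\<And>i. i < N \<Longrightarrow> phase_after \<phi> i \<le> v" "j < N" "phase_after \<phi> j = v"
  shows "gap U R eps N \<phi> = 1 - v"
  unfolding gap_def using Max_eqI_lessThan[of N "phase_after \<phi>" v j] assms by simp

text \<open>The synchronous state: all units at phase 1 form one avalanche of size N and return
  together after time 1 - U^-1(R((N-1) eps)).\<close>
lemma synchronous_sequence:
  defines "F \<equiv> [(N, 1 - reset_phase N 0)]"
  shows "admissible U R eps N F" and "trigger_invariant U R eps N F"
proof -
  define \<phi> where "\<phi> = (\<lambda>i::nat. 1::real)"
  have trig: "trig N \<phi> = {..<N}" unfolding trig_def \<phi>_def by auto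
  then have fired: "fired \<phi> = {..<N}" using fired_eq_trig aval_closed_all by metis
  have reset: "phase_after \<phi> i = reset_phase N 0" if "i < N" for i
    unfolding post_def Let_def Jmap_def reset_phase_def
    using fired U_1 that by (simp add: \<phi>_def mult.commute)
  then have gap: "gap U R eps N \<phi> = 1 - reset_phase N 0"
    using gap_eqI[of "\<phi>" "reset_phase N 0" 0] N_pos by simp
  have returned: "orbit \<phi> 1 i = 1" if "i < N" for i
    using reset[OF that] gap by (simp add: orbit_Suc orbit_0 next_state_def)
  then have "0 \<in> trig N (orbit \<phi> 1)" using N_pos unfolding trig_def by simp
  then have fired1: "0 \<in> fired (orbit \<phi> 1)" using trig_subset_fired by blast
  have realizes: "realizes U R eps N \<phi> F"
    unfolding realizes_def
  proof (intro conjI)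
    show "valid_state N \<phi>" unfolding valid_state_def \<phi>_def using N_pos by (auto intro: exI[of _ 0])
    show "aval U eps N (orbit \<phi> (length F)) \<inter> trig N \<phi> \<noteq> {}"
      using fired1 trig N_pos unfolding F_def by auto
  qed (use fired gap in \<open>simp_all add: F_def orbit_0\<close>)
  then show "admissible U R eps N F" unfolding admissible_def by blast
  show "trigger_invariant U R eps N F"
    unfolding trigger_invariant_def using realizes returned trig
    by (intro exI[of _ \<phi>]) (simp add: F_def)
qed

lemma necessity_synchronous:
  assumes inv: "invariant_under_return U R eps N N" and a: "a \<in> {1..<N}"
  shows "condB U R eps N N a"
proof -
  define F where "F = [(N, 1 - reset_phase N 0)]"
  have "Uinv U (1 - real a * eps) \<le> Mmap U R eps F (Uinv U (1 - real a * eps))"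
    using inv a synchronous_sequence unfolding invariant_under_return_def F_def by simp
  also have "\<dots> = reset_phase N a + (1 - reset_phase N 0)"
    unfolding Mmap_def F_def Smap_def using J_first_avalanche[of a N] pulse_lt_1[of a] a by simp
  finally show ?thesis
    using condB_reset_phase[of a N] reset_phase_props(1)[of a N] reset_phase_props(1)[of 0 N] a
    by (simp add: H_zero)
qed

end

text \<open>Two clusters: a1 units at phase 1 and the remaining N - a1 units at a common phase that
  reaches 1 a short time t after the first avalanche.  The first cluster fires, then the second
  one, and after that the first cluster is back at phase 1.\<close>
locale two_clusters = network +
  fixes a1 :: nat and t :: real
  assumes a1: "1 \<le> a1" "a1 < N"
    and t_pos: "0 < t"
    and t_small: "reset_phase a1 0 + t < 1"
      "U (reset_phase a1 0 + t) + (real N - real a1) * eps < 1"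
      "real a1 * eps < U (1 - t)"
begin

definition start :: "nat \<Rightarrow> real" where
  "start i = (if i < a1 then 1 else Uinv U (U (1 - t) - real a1 * eps))"

text \<open>Phase of the first cluster right after the second avalanche.\<close>
definition first_cluster_phase :: real where
  "first_cluster_phase = Uinv U (U (reset_phase a1 0 + t) + (real N - real a1) * eps)"

definition cluster_sequence :: "(nat \<times> real) list" where
  "cluster_sequence = [(a1, t), (N - a1, 1 - first_cluster_phase)]"

lemma first_reset: "reset_phase a1 0 \<in> {0..1}" "reset_phase a1 0 + t \<in> {0..1}"
  using reset_phase_props(1)[of 0 a1] a1 t_pos t_small by auto

lemma rest_pulse: "0 < (real N - real a1) * eps" "eps * real (N - a1) = (real N - real a1) * eps"
  using a1 eps_pos by (simp_all add: of_nat_diff mult.commute)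

lemma second_start: "Uinv U (U (1 - t) - real a1 * eps) \<in> {0..1}"
  "U (Uinv U (U (1 - t) - real a1 * eps)) = U (1 - t) - real a1 * eps"
  "Uinv U (U (1 - t) - real a1 * eps) < 1" "U (1 - t) < 1"
proof -
  have t1: "1 - t \<in> {0..1}" "1 - t < 1" using first_reset t_pos by auto
  show q: "U (1 - t) < 1" using U_less[of "1 - t" 1] U_1 t1 by auto
  have "0 \<le> real a1 * eps" using eps_pos by simp
  then have r: "U (1 - t) - real a1 * eps \<in> {0..1}" using t_small(3) q by auto
  show "Uinv U (U (1 - t) - real a1 * eps) \<in> {0..1}" using Uinv_range[OF r] .
  show "U (Uinv U (U (1 - t) - real a1 * eps)) = U (1 - t) - real a1 * eps" using U_Uinv[OF r] .
  show "Uinv U (U (1 - t) - real a1 * eps) < 1"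
    using Uinv_less_iff[OF r, of 1] Uinv_1 q \<open>0 \<le> real a1 * eps\<close> by simp
qed

lemma start_trig: "trig N start = {..<a1}"
  unfolding trig_def start_def using a1 second_start(3) by auto

lemma start_fired: "fired start = {..<a1}"
proof -
  have "aval_closed U eps N start {..<a1}"
    unfolding aval_closed_def start_def using a1 second_start by auto
  then show ?thesis using fired_eq_trig start_trig by simp
qed

lemma start_post: "phase_after start i = (if i < a1 then reset_phase a1 0 else 1 - t)"
proof (cases "i < a1")
  case True
  then show ?thesis
    unfolding post_def Let_def start_fired Jmap_def reset_phase_def start_def
    using U_1 by (simp add: mult.commute)
next
  case False
  then have "phase_after start i = Hmap U (eps * real a1) (Uinv U (U (1 - t) - real a1 * eps))"
    unfolding post_def Let_def start_fired start_def by simp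
  also have "\<dots> = 1 - t"
    unfolding Hmap_def using second_start(2) Uinv_U[of "1 - t"] first_reset t_pos by (simp add: mult.commute)
  finally show ?thesis using False by simp
qed

lemma start_gap: "gap U R eps N start = t"
  using gap_eqI[of start "1 - t" a1] start_post first_reset a1 by (auto split: if_splits)

lemma orbit_1: "orbit start 1 i = (if i < a1 then reset_phase a1 0 + t else 1)"
  using start_post start_gap by (simp add: orbit_Suc orbit_0 next_state_def)

lemma second_fired: "fired (orbit start 1) = {a1..<N}"
proof -
  have trig: "trig N (orbit start 1) = {a1..<N}"
    unfolding trig_def orbit_1 using t_small by auto
  have "aval_closed U eps N (orbit start 1) {a1..<N}"
    unfolding aval_closed_def orbit_1 using t_small rest_pulse by (auto simp: mult.commute)
  then show ?thesis using fired_eq_trig trig by simp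
qed

lemma second_post:
  "i < a1 \<Longrightarrow> phase_after (orbit start 1) i = first_cluster_phase"
  "a1 \<le> i \<Longrightarrow> i < N \<Longrightarrow> phase_after (orbit start 1) i \<le> first_cluster_phase"
proof -
  show "phase_after (orbit start 1) i = first_cluster_phase" if "i < a1"
    unfolding post_def Let_def second_fired first_cluster_phase_def Hmap_def orbit_1
    using that a1 by (simp add: of_nat_diff mult.commute)
  assume i: "a1 \<le> i" "i < N"
  define z where "z = eps * (real (N - a1) - 1)"
  have "1 \<le> real (N - a1)" using a1 by simp
  then have z: "0 \<le> z" "z < (real N - real a1) * eps"
    unfolding z_def using eps_pos rest_pulse(2) by (auto simp: right_diff_distrib)
  have "phase_after (orbit start 1) i = Uinv U (R z)"
    unfolding post_def Let_def second_fired Jmap_def z_def orbit_1 using i U_1 by simp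
  moreover have "R z \<le> U (reset_phase a1 0 + t) + (real N - real a1) * eps"
    using R_bounds[OF z(1)] z U_range[OF first_reset(2)] by auto
  ultimately show "phase_after (orbit start 1) i \<le> first_cluster_phase"
    unfolding first_cluster_phase_def
    using Uinv_le_iff R_bounds[OF z(1)] z U_range[OF first_reset(2)] t_small(2) by auto
qed

lemma second_gap: "gap U R eps N (orbit start 1) = 1 - first_cluster_phase"
proof (rule gap_eqI)
  show "phase_after (orbit start 1) i \<le> first_cluster_phase" if "i < N" for i
    using second_post[of i] that by (cases "i < a1") auto
  show "0 < N" "phase_after (orbit start 1) 0 = first_cluster_phase" using second_post(1) a1 by auto
qed

lemma orbit_2: "i < a1 \<Longrightarrow> orbit start 2 i = 1"
  using second_post(1) second_gap by (simp add: numeral_2_eq_2 orbit_Suc next_state_def)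

lemma cluster_realizes: "realizes U R eps N start cluster_sequence"
  unfolding realizes_def
proof (intro conjI)
  show "valid_state N start"
    unfolding valid_state_def start_def using second_start a1 by (auto intro!: exI[of _ 0])
  show "\<forall>r<length cluster_sequence. cluster_sequence ! r =
      (card (fired (orbit start r)), gap U R eps N (orbit start r))"
    unfolding cluster_sequence_def using start_fired start_gap second_fired second_gap
    by (auto simp: orbit_0 less_Suc_eq)
  have "0 \<in> trig N (orbit start 2)" using orbit_2 a1 unfolding trig_def by auto
  then have "0 \<in> fired (orbit start 2)" using trig_subset_fired by blast
  then show "fired (orbit start (length cluster_sequence)) \<inter> trig N start \<noteq> {}"
    using start_trig a1 unfolding cluster_sequence_def by (auto simp: numeral_2_eq_2)
qed (use second_fired start_trig in \<open>auto simp: cluster_sequence_def\<close>)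

lemma cluster_sequence_props:
  "admissible U R eps N cluster_sequence" "trigger_invariant U R eps N cluster_sequence"
  "fst (hd cluster_sequence) = a1"
  using cluster_realizes orbit_2 start_trig
  unfolding admissible_def trigger_invariant_def cluster_sequence_def
  by (auto simp: numeral_2_eq_2)

lemma cluster_Mmap:
  assumes "a < a1"
  shows "Mmap U R eps cluster_sequence (Uinv U (1 - real a * eps))
    = Hmap U ((real N - real a1) * eps) (reset_phase a1 a + t) + (1 - first_cluster_phase)"
  unfolding Mmap_def cluster_sequence_def Smap_def
  using J_first_avalanche[of a a1] pulse_lt_1[of a] assms a1 rest_pulse(2) by (simp add: mult.commute)

end

context rise
begin

lemma H_shift_tendsto:
  assumes "x \<in> {0..1}" "0 < U x + K" "U x + K < 1"
  shows "((\<lambda>t. Hmap U K (x + t)) \<longlongrightarrow> Hmap U K x) (at_right 0)"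
proof -
  have shift: "((\<lambda>t. x + t) \<longlongrightarrow> x) (at_right 0)"
    using tendsto_add[OF tendsto_const[of x] tendsto_ident_at[of 0]] by simp
  have "((\<lambda>t. U (x + t) + K) \<longlongrightarrow> U x + K) (at_right 0)"
    using tendsto_add[OF isCont_tendsto_compose[OF U_isCont[OF assms(1)] shift] tendsto_const] by simp
  then show ?thesis
    unfolding Hmap_def using isCont_tendsto_compose[OF Uinv_isCont[OF assms(2,3)]] by blast
qed

end

context network
begin

lemma two_clusters_eventually:
  assumes a1: "1 \<le> a1" "a1 < N"
  shows "\<forall>\<^sub>F t in at_right 0. two_clusters U R eps N a1 t"
proof -
  define x0 where "x0 = reset_phase a1 0"
  define K where "K = (real N - real a1) * eps"
  have x0: "x0 \<in> {0..1}" "U x0 = R ((real a1 - 1) * eps)"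
    using reset_phase_props[of 0 a1] a1 unfolding x0_def by auto
  have "R ((real a1 - 1) * eps) + K \<le> (real N - 1) * eps"
    using reset_phase_props(4)[of 0 a1] a1 unfolding K_def by (simp add: algebra_simps)
  then have xK: "U x0 + K < 1" using x0 coupling_small by simp
  have "0 < K" using a1 eps_pos K_def by simp
  then have x1: "x0 < 1" using xK x0 U_1 U_range[OF x0(1)] by (metis add.commute add_less_same_cancel1
      atLeastAtMost_iff le_less not_less)
  have lim_x: "((\<lambda>t. x0 + t) \<longlongrightarrow> x0) (at_right 0)"
    using tendsto_add[OF tendsto_const[of x0] tendsto_ident_at[of 0]] by simp
  have lim_Ux: "((\<lambda>t. U (x0 + t) + K) \<longlongrightarrow> U x0 + K) (at_right 0)"
    using tendsto_add[OF isCont_tendsto_compose[OF U_isCont[OF x0(1)] lim_x] tendsto_const] by simp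
  have "((\<lambda>t::real. 1 - t) \<longlongrightarrow> 1) (at_right 0)"
    using tendsto_diff[OF tendsto_const[of 1] tendsto_ident_at[of 0]] by simp
  then have lim_U1: "((\<lambda>t. U (1 - t)) \<longlongrightarrow> 1) (at_right 0)"
    using isCont_tendsto_compose[OF U_isCont[of 1]] U_1 by simp
  have "real a1 * eps < 1" using pulse_lt_1 a1 by simp
  then have "\<forall>\<^sub>F t in at_right 0. 0 < t \<and> x0 + t < 1 \<and> U (x0 + t) + K < 1 \<and> real a1 * eps < U (1 - t)"
    using eventually_at_right_less[of 0] order_tendstoD(2)[OF lim_x x1]
      order_tendstoD(2)[OF lim_Ux xK] order_tendstoD(1)[OF lim_U1]
    by (intro eventually_conj) auto
  then show ?thesis
  proof (rule eventually_mono)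
    fix t assume "0 < t \<and> x0 + t < 1 \<and> U (x0 + t) + K < 1 \<and> real a1 * eps < U (1 - t)"
    then show "two_clusters U R eps N a1 t"
      using a1 rise reset eps_pos coupling_small N_pos unfolding x0_def K_def
      by unfold_locales auto
  qed
qed

text \<open>Invariance under return forces condition B: for small t the two-cluster sequence makes the
  comparison unit end at H_K(y0 + t) + 1 - H_K(x0 + t), which tends to the bound of B.\<close>
lemma necessity_two_clusters:
  assumes inv: "invariant_under_return U R eps N a1" and a1: "a1 < N" and a: "a \<in> {1..<a1}"
  shows "condB U R eps N a1 a"
proof (rule ccontr)
  define x0 where "x0 = reset_phase a1 0"
  define y0 where "y0 = reset_phase a1 a"
  define K where "K = (real N - real a1) * eps"
  define D where "D = (\<lambda>t. Hmap U K (x0 + t) - Hmap U K (y0 + t))"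
  assume "\<not> condB U R eps N a1 a"
  then have D0: "1 - Uinv U (1 - real a * eps) < D 0"
    using condB_reset_phase[of a a1] a a1 unfolding D_def x0_def y0_def K_def by simp
  have x0: "x0 \<in> {0..1}" "U x0 = R ((real a1 - 1) * eps)"
    and y0: "y0 \<in> {0..1}" "y0 \<le> x0"
    using reset_phase_props[of 0 a1] reset_phase_props[of a a1] a a1 unfolding x0_def y0_def by auto
  have K0: "0 < K" using a1 eps_pos K_def by simp
  have "R ((real a1 - 1) * eps) + K \<le> (real N - 1) * eps"
    using reset_phase_props(4)[of 0 a1] a a1 unfolding K_def by (simp add: algebra_simps)
  then have xK: "U x0 + K < 1" "0 < U x0 + K" using x0 K0 coupling_small U_range[OF x0(1)] by auto
  have yK: "U y0 + K < 1" "0 < U y0 + K" using U_le[of y0 x0] x0 y0 xK K0 U_range[OF y0(1)] by auto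
  have "(D \<longlongrightarrow> D 0) (at_right 0)"
    unfolding D_def using tendsto_diff[OF H_shift_tendsto[OF x0(1) xK(2,1)] H_shift_tendsto[OF y0(1) yK(2,1)]]
    by simp
  then have "\<forall>\<^sub>F t in at_right 0. two_clusters U R eps N a1 t \<and> 1 - Uinv U (1 - real a * eps) < D t"
    using two_clusters_eventually[of a1] order_tendstoD(1)[OF _ D0] a a1 by (intro eventually_conj) auto
  then obtain t where t: "two_clusters U R eps N a1 t" "1 - Uinv U (1 - real a * eps) < D t"
    using eventually_happens'[OF trivial_limit_at_right_real] by blast
  interpret clusters: two_clusters U R eps N a1 t by (rule t(1))
  have "Uinv U (1 - real a * eps) \<le> Mmap U R eps clusters.cluster_sequence (Uinv U (1 - real a * eps))"
    using inv a clusters.cluster_sequence_props unfolding invariant_under_return_def by blast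
  then have "D t \<le> 1 - Uinv U (1 - real a * eps)"
    using clusters.cluster_Mmap[of a] a
    unfolding D_def clusters.first_cluster_phase_def Hmap_def x0_def y0_def K_def by simp
  then show False using t by simp
qed

end

context network
begin

lemma sufficiency:
  assumes cond: "\<And>a. a \<in> {1..<a1} \<Longrightarrow>
      (icpd U \<and> condA U R eps N a1 a) \<or> (dcpd U \<and> condB U R eps N a1 a)"
  shows "invariant_under_return U R eps N a1"
  unfolding invariant_under_return_def
proof (intro ballI allI impI)
  fix a F assume a: "a \<in> {1..<a1}"
    and F: "admissible U R eps N F \<and> trigger_invariant U R eps N F \<and> fst (hd F) = a1"
  then obtain \<phi> where realizes: "realizes U R eps N \<phi> F"
    and returns: "\<forall>i\<in>trig N \<phi>. orbit \<phi> (length F) i = 1"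
    unfolding trigger_invariant_def by blast
  then obtain i0 where "i0 \<in> trig N \<phi>" unfolding realizes_def valid_state_def trig_def by blast
  then interpret return: firing_return U R eps N \<phi> F i0
    using realizes returns by unfold_locales
  have "card (return.avalanche 0) = a1" using F return.first_size by simp
  then show "Uinv U (1 - real a * eps) \<le> Mmap U R eps F (Uinv U (1 - real a * eps))"
    using cond[OF a] return.sufficiency_icpd return.sufficiency_dcpd a by auto
qed

lemma necessity:
  assumes "invariant_under_return U R eps N a1" "a1 \<le> N" "a \<in> {1..<a1}"
  shows "condB U R eps N a1 a"
  using assms necessity_synchronous necessity_two_clusters by (cases "a1 = N") auto

end

theorem mainTheorem6:
  fixes U R :: "real \<Rightarrow> real" and eps :: real and N a1 :: nat
  assumes "rise_function U"
    and "neuronal_reset R"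
    and "eps > 0"
    and "(real N - 1) * eps < 1"
    and "2 \<le> a1" and "a1 \<le> N"
  shows "(icpd U \<longrightarrow>
            ((\<forall>a\<in>{1..<a1}. condA U R eps N a1 a) \<longrightarrow> invariant_under_return U R eps N a1) \<and>
            (invariant_under_return U R eps N a1 \<longrightarrow> (\<forall>a\<in>{1..<a1}. condB U R eps N a1 a)))
       \<and> (dcpd U \<longrightarrow>
            ((\<forall>a\<in>{1..<a1}. condB U R eps N a1 a) \<longrightarrow> invariant_under_return U R eps N a1) \<and>
            (invariant_under_return U R eps N a1 \<longrightarrow> (\<forall>a\<in>{1..<a1}. condA U R eps N a1 a)))"
proof -
  interpret network U R eps N
    using assms by unfold_locales auto
  have necessary_B: "invariant_under_return U R eps N a1 \<Longrightarrow> \<forall>a\<in>{1..<a1}. condB U R eps N a1 a"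
    using necessity assms(6) by blast
  have dcpd_B_gives_A: "dcpd U \<Longrightarrow> a \<in> {1..<a1} \<Longrightarrow> condB U R eps N a1 a \<Longrightarrow> condA U R eps N a1 a"
    for a using dcpd_condB_imp_condA assms(6) by simp
  show ?thesis
    using sufficiency[of a1] necessary_B dcpd_B_gives_A by blast
qed

end
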